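(* Let $g$, $u_0$ be as in the context and let $u^{\rm LT}(t,x_n)$ be the time-continuous interpolation of the Lie–Trotter scheme defined in the context. For all $\gamma\in(0,\infty)$ and all $T\in(0,\infty)$ there exists $C_{\gamma,T}\in(0,\infty)$ such that for all $\tau=T/M$ and $h=1/N$ satisfying $\tau\le\gamma h$, for all $m\in\{0,\dots,M-1\}$ and all $t\in[t_m,t_{m+1})$, $$\sup_{1\le n\le N-1}\big(\mathbb E[|u^{\rm LT}(t,x_n)-u^{\rm LT}(t_m,x_n)|^2]\big)^{1/2}\le C_{\gamma,T}\big(1+\|u_0\|_\infty\big)\Big(\frac{\tau}{h}\Big)^{1/2}.$$
   Context: $W$ is an $\mathcal F_t$-adapted Brownian sheet on $[0,T]\times[0,1]$ (centered Gaussian field with covariance $(t\wedge s)(x\wedge y)$). The map $g:\mathbb R\to\mathbb R$ is of class $\mathcal C^1$, globally Lipschitz, with $g(0)=0$; define $f(v)=g(v)/v$ for $v\ne0$ and $f(0)=g'(0)$. The initial value $u_0:[0,1]\to\mathbb R$ is of class $\mathcal C^3$ with $u_0(0)=u_0(1)=0$, and $\|u_0\|_\infty=\max|u_0|$. Let $h=1/N$, $x_n=nh$, $\tau=T/M$, $t_m=m\tau$. Let $D^N$ be the $(N-1)\times(N-1)$ tridiagonal matrix with $-2$ on the diagonal and $1$ on the off-diagonals. Let $W_n^N(t)=\sqrt N\,(W(t,x_{n+1})-W(t,x_n))$ and $\Delta_{m,n}W=W_n^N(t_{m+1})-W_n^N(t_m)$. Lie–Trotter scheme: $u_{0,n}^{\rm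 LT}=u_0(x_n)$, and for $0\le m\le M-1$, $$u_{m+1}^{\rm LT}=e^{\tau N^2D^N}\Big(\exp\big(\sqrt N f(u_{m,n}^{\rm LT})\Delta_{m,n}W-\tfrac{N f(u_{m,n}^{\rm LT})^2\tau}{2}\big)u_{m,n}^{\rm LT}\Big)_{1\le n\le N-1}.$$ Interpolation: $u^{\rm LT}(t_m,x_n)=u_{m,n}^{\rm LT}$, and for $t\in[t_m,t_{m+1})$, $1\le n\le N-1$, $u^{\rm LT}(t,x_n)=\exp\big(\sqrt N f(u_{m,n}^{\rm LT})(W_n^N(t)-W_n^N(t_m))-\tfrac{N f(u_{m,n}^{\rm LT})^2(t-t_m)}{2}\big)u_{m,n}^{\rm LT}$. *)

theory Defs
  imports "HOL-Probability.Probability"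
begin

definition centered_gaussian :: "'a measure \<Rightarrow> ('a \<Rightarrow> real) \<Rightarrow> real \<Rightarrow> bool" where
  "centered_gaussian P X v \<longleftrightarrow>
     X \<in> borel_measurable P \<and>
     ((v = 0 \<and> (AE \<omega> in P. X \<omega> = 0)) \<or>
      (v > 0 \<and> distributed P lborel X (normal_density 0 (sqrt v))))"

text \<open>Brownian sheet on [0,oo) x [0,1], adapted to the filtration F:
  centered Gaussian field with covariance (min t s)(min x y) (every finite
  linear combination is centered Gaussian with the corresponding variance),
  W(t,x) is F_t-measurable, and the increments after time s are independent
  of F_s.\<close>
definition brownian_sheet ::
  "'a measure \<Rightarrow> (real \<Rightarrow> 'a measure) \<Rightarrow> (real \<Rightarrow> real \<Rightarrow> 'a \<Rightarrow> real) \<Rightarrow> bool" where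
  "brownian_sheet P F W \<longleftrightarrow>
     filtration (space P) F \<and> (\<forall>t. sets (F t) \<subseteq> sets P) \<and>
     (\<forall>t x. 0 \<le> t \<longrightarrow> 0 \<le> x \<longrightarrow> x \<le> 1 \<longrightarrow> W t x \<in> borel_measurable (F t)) \<and>
     (\<forall>(k::nat) (ts::nat \<Rightarrow> real) (xs::nat \<Rightarrow> real) (c::nat \<Rightarrow> real).
        (\<forall>i<k. 0 \<le> ts i \<and> 0 \<le> xs i \<and> xs i \<le> 1) \<longrightarrow>
        centered_gaussian P (\<lambda>\<omega>. \<Sum>i<k. c i * W (ts i) (xs i) \<omega>)
          (\<Sum>i<k. \<Sum>j<k. c i * c j * min (ts i) (ts j) * min (xs i) (xs j))) \<and>
     (\<forall>s. 0 \<le> s \<longrightarrow>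
        prob_space.indep_set P (sets (F s))
          (sigma_sets (space P)
             (\<Union>r\<in>{s..}. \<Union>x\<in>{0..1}.
                {(\<lambda>\<omega>. W r x \<omega> - W s x \<omega>) -` B \<inter> space P | B. B \<in> sets borel})))"

definition C3_on_unit :: "(real \<Rightarrow> real) \<Rightarrow> bool" where
  "C3_on_unit u \<longleftrightarrow> (\<exists>u1 u2 u3. continuous_on {0..1} u3 \<and>
     (\<forall>x\<in>{0..1}. (u has_real_derivative u1 x) (at x within {0..1}) \<and>
                  (u1 has_real_derivative u2 x) (at x within {0..1}) \<and>
                  (u2 has_real_derivative u3 x) (at x within {0..1})))"

definition sup_norm01 :: "(real \<Rightarrow> real) \<Rightarrow> real" where
  "sup_norm01 u = Sup ((\<lambda>x. \<bar>u x\<bar>) ` {0..1})"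

definition fq :: "(real \<Rightarrow> real) \<Rightarrow> real \<Rightarrow> real" where
  "fq g v = (if v = 0 then deriv g 0 else g v / v)"

definition WN :: "(real \<Rightarrow> real \<Rightarrow> 'a \<Rightarrow> real) \<Rightarrow> nat \<Rightarrow> real \<Rightarrow> nat \<Rightarrow> 'a \<Rightarrow> real" where
  "WN W N t n \<omega> = sqrt (real N) * (W t (real (Suc n) / real N) \<omega> - W t (real n / real N) \<omega>)"

text \<open>Vectors of R^(N-1) are represented as functions nat => real, indexed by
  1..N-1 (other entries are irrelevant). DN N v is the product D^N v of the
  tridiagonal matrix (-2 on the diagonal, 1 off the diagonal) with v.\<close>
definition DN :: "nat \<Rightarrow> (nat \<Rightarrow> real) \<Rightarrow> nat \<Rightarrow> real" where
  "DN N v n = (if 1 \<le> n \<and> n \<le> N - 1 then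
       (if 2 \<le> n then v (n - 1) else 0) - 2 * v n + (if n + 1 \<le> N - 1 then v (n + 1) else 0)
     else 0)"

definition expD :: "nat \<Rightarrow> real \<Rightarrow> (nat \<Rightarrow> real) \<Rightarrow> nat \<Rightarrow> real" where
  "expD N s v n = (\<Sum>k. s ^ k / fact k * ((DN N ^^ k) v) n)"

primrec LT :: "(real \<Rightarrow> real) \<Rightarrow> (real \<Rightarrow> real) \<Rightarrow> (real \<Rightarrow> real \<Rightarrow> 'a \<Rightarrow> real) \<Rightarrow>
    real \<Rightarrow> nat \<Rightarrow> nat \<Rightarrow> nat \<Rightarrow> nat \<Rightarrow> 'a \<Rightarrow> real" where
  "LT g u0 W T M N 0 n \<omega> = u0 (real n / real N)"
| "LT g u0 W T M N (Suc m) n \<omega> =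
     expD N ((T / real M) * (real N)^2)
       (\<lambda>k. exp (sqrt (real N) * fq g (LT g u0 W T M N m k \<omega>) *
                   (WN W N (real (Suc m) * (T / real M)) k \<omega> - WN W N (real m * (T / real M)) k \<omega>)
                 - real N * (fq g (LT g u0 W T M N m k \<omega>))^2 * (T / real M) / 2)
            * LT g u0 W T M N m k \<omega>) n"

definition LT_interp :: "(real \<Rightarrow> real) \<Rightarrow> (real \<Rightarrow> real) \<Rightarrow> (real \<Rightarrow> real \<Rightarrow> 'a \<Rightarrow> real) \<Rightarrow>
    real \<Rightarrow> nat \<Rightarrow> nat \<Rightarrow> real \<Rightarrow> nat \<Rightarrow> 'a \<Rightarrow> real" where
  "LT_interp g u0 W T M N t n \<omega> =
     (let \<tau> = T / real M; m = nat \<lfloor>t / \<tau>\<rfloor>; u = LT g u0 W T M N m n \<omega> in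
      exp (sqrt (real N) * fq g u * (WN W N t n \<omega> - WN W N (real m * \<tau>) n \<omega>)
           - real N * (fq g u)^2 * (t - real m * \<tau>) / 2) * u)"

end

theory Submission
  imports Defs
begin

(* On [t_m, t_(m+1)) the interpolant is u(t, x_n) = xi * u_(m,n), where
   xi = exp (sqrt N f(u_(m,n)) dW - N f(u_(m,n))^2 (t - t_m) / 2) is the stochastic exponential of
   a Brownian-sheet increment that is independent of F_(t_m), while u_(m,.) is F_(t_m)-measurable.
   Integrating the increment out with u_(m,.) frozen gives
   E[(xi - 1)^2 u_(m,n)^2] = E[(exp (N f^2 (t - t_m)) - 1) u_(m,n)^2] <= L^2 exp (L^2 gamma) N tau E[u_(m,n)^2],
   so everything reduces to a bound on E[u_(m,n)^2] that is uniform in N and M.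
   In the sine eigenbasis of D^N the heat kernel K_s = exp (s D^N) is a sup-norm contraction and
   sum_k K_s(n,k)^2 = K_(2s)(n,n) <= 2/N sum_i exp (-8 i^2 s / N^2).
   Because xi has conditional mean one, the second moments satisfy
   E[u_(m,n)^2] = ((K_(m tau N^2) u_0)_n)^2 + sum_(l<m) sum_k K_((m-l) tau N^2)(n,k)^2 E[(xi - 1)^2 u_(l,k)^2],
   a Volterra inequality whose kernel is summable in l uniformly in N; a discrete Gronwall argument
   with weight exp (rho t_m) then gives E[u_(m,n)^2] <= 2 sup|u_0|^2 exp (rho T). *)

section \<open>The sine basis and the discrete heat kernel\<close>

lemma two_sin_mult_sum_cos:
  fixes y :: real
  shows "2 * sin y * (\<Sum>n=1..m. cos (2 * real n * y)) = sin ((2 * real m + 1) * y) - sin y"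
proof (induction m)
  case 0
  then show ?case by simp
next
  case (Suc m)
  have "2 * sin y * cos (2 * real (Suc m) * y)
      = sin ((2 * real (Suc m) + 1) * y) - sin ((2 * real m + 1) * y)"
    using sin_times_cos[of y "2 * real (Suc m) * y"] by (simp add: algebra_simps sin_add sin_diff)
  with Suc show ?case
    by (simp add: distrib_left del: of_nat_Suc)
qed

lemma sum_cos_mult_pi_div:
  fixes N p :: nat
  assumes "0 < p" "p < 2 * N"
  shows "(\<Sum>n=1..N-1. cos (real p * real n * pi / real N)) = - (1 + (-1) ^ p) / 2"
proof -
  define y where "y = real p * pi / (2 * real N)"
  have N: "N > 0" using assms by auto
  have "0 < y" "y < pi" using assms N by (auto simp: y_def field_simps)
  then have sin_y: "sin y > 0" by (simp add: sin_gt_zero)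
  have cos_eq: "\<And>n. cos (real p * real n * pi / real N) = cos (2 * real n * y)"
    using N by (simp add: y_def field_simps)
  have "sin ((2 * real (N - 1) + 1) * y) = sin (real p * pi - y)"
    using N by (simp add: y_def of_nat_diff field_simps)
  also have "\<dots> = - ((-1) ^ p) * sin y"
    by (simp add: sin_diff sin_npi cos_npi_int)
  finally have "2 * sin y * (\<Sum>n=1..N-1. cos (2 * real n * y)) = 2 * sin y * (- (1 + (-1) ^ p) / 2)"
    using two_sin_mult_sum_cos[of y "N - 1"] by (simp add: algebra_simps)
  then show ?thesis
    using sin_y by (simp add: cos_eq)
qed

definition sine_mode :: "nat \<Rightarrow> nat \<Rightarrow> nat \<Rightarrow> real" where
  "sine_mode N i n = sin (real i * real n * pi / real N)"

definition sine_eigenvalue :: "nat \<Rightarrow> nat \<Rightarrow> real" where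
  "sine_eigenvalue N i = 2 * (cos (real i * pi / real N) - 1)"

definition sine_coeff :: "nat \<Rightarrow> (nat \<Rightarrow> real) \<Rightarrow> nat \<Rightarrow> real" where
  "sine_coeff N v i = 2 / real N * (\<Sum>k=1..N-1. sine_mode N i k * v k)"

lemma sine_mode_commute: "sine_mode N i n = sine_mode N n i"
  by (simp add: sine_mode_def mult.commute)

lemma sine_mode_0 [simp]: "sine_mode N i 0 = 0"
  by (simp add: sine_mode_def)

lemma sine_mode_N [simp]: "N > 0 \<Longrightarrow> sine_mode N i N = 0"
  by (simp add: sine_mode_def sin_npi2 mult.commute)

lemma sine_mode_mult:
  "sine_mode N i n * sine_mode N j n =
     (cos (real (if j \<le> i then i - j else j - i) * real n * pi / real N)
      - cos (real (i + j) * real n * pi / real N)) / 2"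
proof -
  have "cos (real i * real n * pi / real N - real j * real n * pi / real N)
      = cos (real (if j \<le> i then i - j else j - i) * real n * pi / real N)"
  proof (cases "j \<le> i")
    case False
    have "cos (real i * real n * pi / real N - real j * real n * pi / real N)
        = cos (real j * real n * pi / real N - real i * real n * pi / real N)"
      by (metis cos_minus minus_diff_eq)
    with False show ?thesis
      by (simp add: of_nat_diff algebra_simps diff_divide_distrib)
  qed (simp add: of_nat_diff algebra_simps diff_divide_distrib)
  moreover have "real i * real n * pi / real N + real j * real n * pi / real N
      = real (i + j) * real n * pi / real N"
    by (simp add: algebra_simps add_divide_distrib)
  ultimately show ?thesis
    unfolding sine_mode_def sin_times_sin by simp
qed

lemma sine_mode_orthogonal:
  assumes "i \<in> {1..N-1}" "j \<in> {1..N-1}"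
  shows "(\<Sum>n=1..N-1. sine_mode N i n * sine_mode N j n) = (if i = j then real N / 2 else 0)"
proof -
  define d where "d = (if j \<le> i then i - j else j - i)"
  have N: "N > 1" using assms by auto
  have sum_ij: "(\<Sum>n=1..N-1. cos (real (i + j) * real n * pi / real N)) = - (1 + (-1) ^ (i + j)) / 2"
    using sum_cos_mult_pi_div[of "i + j" N] assms by auto
  have "(\<Sum>n=1..N-1. sine_mode N i n * sine_mode N j n) =
     ((\<Sum>n=1..N-1. cos (real d * real n * pi / real N))
      - (\<Sum>n=1..N-1. cos (real (i + j) * real n * pi / real N))) / 2"
    by (simp only: sine_mode_mult sum_divide_distrib[symmetric] sum_subtractf d_def)
  also have "\<dots> = (if i = j then real N / 2 else 0)"
  proof (cases "i = j")
    case True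
    then show ?thesis
      using sum_ij N by (simp add: d_def of_nat_diff)
  next
    case False
    have "i + j = d + 2 * min i j" by (auto simp: d_def)
    then have "(-1::real) ^ (i + j) = (-1) ^ d" by (simp add: power_add power_mult)
    moreover have "(\<Sum>n=1..N-1. cos (real d * real n * pi / real N)) = - (1 + (-1) ^ d) / 2"
      using sum_cos_mult_pi_div[of d N] assms False by (auto simp: d_def)
    ultimately show ?thesis
      using False sum_ij by simp
  qed
  finally show ?thesis .
qed

lemma sine_expansion:
  assumes "n \<in> {1..N-1}"
  shows "v n = (\<Sum>i=1..N-1. sine_coeff N v i * sine_mode N i n)"
proof -
  have "(\<Sum>i=1..N-1. sine_coeff N v i * sine_mode N i n)
      = (\<Sum>k=1..N-1. v k * (2 / real N * (\<Sum>i=1..N-1. sine_mode N i k * sine_mode N i n)))"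
    unfolding sine_coeff_def
    by (simp add: sum_distrib_left sum_distrib_right algebra_simps) (rule sum.swap)
  also have "\<dots> = (\<Sum>k=1..N-1. if k = n then v k else 0)"
  proof (intro sum.cong refl)
    fix k
    assume k: "k \<in> {1..N-1}"
    have "(\<Sum>i=1..N-1. sine_mode N i k * sine_mode N i n) = (\<Sum>i=1..N-1. sine_mode N k i * sine_mode N n i)"
      by (intro sum.cong refl) (simp add: sine_mode_commute[of N _ k] sine_mode_commute[of N _ n])
    also have "\<dots> = (if k = n then real N / 2 else 0)"
      by (rule sine_mode_orthogonal[OF k assms])
    finally show "v k * (2 / real N * (\<Sum>i=1..N-1. sine_mode N i k * sine_mode N i n)) = (if k = n then v k else 0)"
      using k by auto
  qed
  finally show ?thesis
    using assms by simp
qed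

lemma sine_mode_eigenvector:
  assumes "1 \<le> n"
  shows "sine_mode N i (n - 1) - 2 * sine_mode N i n + sine_mode N i (n + 1)
       = sine_eigenvalue N i * sine_mode N i n"
proof -
  define a where "a = real i * real n * pi / real N"
  define b where "b = real i * pi / real N"
  have "sine_mode N i (n - 1) = sin (a - b)"
    using assms by (simp add: sine_mode_def a_def b_def of_nat_diff algebra_simps diff_divide_distrib)
  moreover have "sine_mode N i (n + 1) = sin (a + b)"
    by (simp add: sine_mode_def a_def b_def algebra_simps add_divide_distrib)
  moreover have "sine_mode N i n = sin a"
    by (simp add: sine_mode_def a_def)
  ultimately show ?thesis
    unfolding sine_eigenvalue_def b_def[symmetric] by (simp add: sin_add sin_diff algebra_simps)
qed

lemma DN_sine_series:
  assumes N: "N > 0" and n: "n \<in> {1..N-1}"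
    and w: "\<And>k. k \<in> {1..N-1} \<Longrightarrow> w k = (\<Sum>i=1..N-1. a i * sine_mode N i k)"
  shows "DN N w n = (\<Sum>i=1..N-1. a i * sine_eigenvalue N i * sine_mode N i n)"
proof -
  have left: "(if 2 \<le> n then w (n - 1) else 0) = (\<Sum>i=1..N-1. a i * sine_mode N i (n - 1))"
  proof (cases "2 \<le> n")
    case True
    then have "n - 1 \<in> {1..N-1}" using n by auto
    with True show ?thesis using w by simp
  next
    case False
    then have "n = 1" using n by auto
    then show ?thesis by simp
  qed
  have right: "(if n + 1 \<le> N - 1 then w (n + 1) else 0) = (\<Sum>i=1..N-1. a i * sine_mode N i (n + 1))"
  proof (cases "n + 1 \<le> N - 1")
    case False
    then have "n + 1 = N" using n by auto
    then show ?thesis using N by simp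
  qed (use w[of "n + 1"] in simp)
  have "DN N w n = (\<Sum>i=1..N-1. a i * sine_mode N i (n - 1)) - 2 * w n
      + (\<Sum>i=1..N-1. a i * sine_mode N i (n + 1))"
    using n unfolding DN_def left right by auto
  also have "\<dots> = (\<Sum>i=1..N-1. a i *
      (sine_mode N i (n - 1) - 2 * sine_mode N i n + sine_mode N i (n + 1)))"
    using w[OF n] by (simp add: algebra_simps sum.distrib sum_subtractf sum_distrib_left)
  also have "\<dots> = (\<Sum>i=1..N-1. a i * sine_eigenvalue N i * sine_mode N i n)"
    using n sine_mode_eigenvector[of n N] by (simp only: mult.assoc) simp
  finally show ?thesis .
qed

lemma DN_power_sine_series:
  assumes N: "N > 0" and n: "n \<in> {1..N-1}"
  shows "(DN N ^^ j) v n = (\<Sum>i=1..N-1. sine_coeff N v i * sine_eigenvalue N i ^ j * sine_mode N i n)"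
  using n
proof (induction j arbitrary: n)
  case 0
  then show ?case using sine_expansion by simp
next
  case (Suc j)
  have "(DN N ^^ Suc j) v n = DN N ((DN N ^^ j) v) n" by simp
  also have "\<dots> = (\<Sum>i=1..N-1. (sine_coeff N v i * sine_eigenvalue N i ^ j) * sine_eigenvalue N i * sine_mode N i n)"
    by (rule DN_sine_series[OF N Suc.prems]) (use Suc.IH in simp)
  finally show ?case by (simp add: algebra_simps)
qed

definition heat_kernel :: "nat \<Rightarrow> real \<Rightarrow> nat \<Rightarrow> nat \<Rightarrow> real" where
  "heat_kernel N s n k =
     2 / real N * (\<Sum>i=1..N-1. exp (s * sine_eigenvalue N i) * sine_mode N i n * sine_mode N i k)"

lemma heat_kernel_apply:
  "(\<Sum>k=1..N-1. heat_kernel N s n k * v k)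
     = (\<Sum>i=1..N-1. sine_coeff N v i * exp (s * sine_eigenvalue N i) * sine_mode N i n)"
  unfolding heat_kernel_def sine_coeff_def
  by (simp add: sum_distrib_left sum_distrib_right algebra_simps) (rule sum.swap)

lemma expD_eq_heat_kernel:
  assumes N: "N > 0" and n: "n \<in> {1..N-1}"
  shows "expD N s v n = (\<Sum>k=1..N-1. heat_kernel N s n k * v k)"
proof -
  have "(\<lambda>j. s ^ j / fact j * ((DN N ^^ j) v) n)
      = (\<lambda>j. \<Sum>i=1..N-1. sine_coeff N v i * sine_mode N i n * ((s * sine_eigenvalue N i) ^ j /\<^sub>R fact j))"
    by (simp add: DN_power_sine_series[OF N n] sum_distrib_left power_mult_distrib
        algebra_simps divide_inverse)
  moreover have "(\<lambda>j. \<Sum>i=1..N-1. sine_coeff N v i * sine_mode N i n * ((s * sine_eigenvalue N i) ^ j /\<^sub>R fact j))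
      sums (\<Sum>i=1..N-1. sine_coeff N v i * sine_mode N i n * exp (s * sine_eigenvalue N i))"
    by (intro sums_sum sums_mult exp_converges)
  ultimately show ?thesis
    unfolding expD_def heat_kernel_apply by (simp add: sums_iff algebra_simps)
qed

lemma heat_kernel_commute: "heat_kernel N s n k = heat_kernel N s k n"
  unfolding heat_kernel_def by (simp add: algebra_simps)

lemma sine_coeff_heat_kernel:
  assumes i: "i \<in> {1..N-1}"
  shows "sine_coeff N (\<lambda>k. heat_kernel N r k j) i = 2 / real N * exp (r * sine_eigenvalue N i) * sine_mode N i j"
proof -
  define e where "e = (\<lambda>i'. exp (r * sine_eigenvalue N i'))"
  have "sine_coeff N (\<lambda>k. heat_kernel N r k j) i
      = 2 / real N * (2 / real N * (\<Sum>k=1..N-1. \<Sum>i'=1..N-1. sine_mode N i k * (e i' * sine_mode N i' k * sine_mode N i' j)))"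
    unfolding sine_coeff_def heat_kernel_def e_def by (simp add: sum_distrib_left mult.assoc)
  also have "\<dots> = 2 / real N * (2 / real N *
      (\<Sum>i'=1..N-1. \<Sum>k=1..N-1. sine_mode N i k * (e i' * sine_mode N i' k * sine_mode N i' j)))"
    by (subst sum.swap) (rule refl)
  also have "\<dots> = 2 / real N * (\<Sum>i'=1..N-1. e i' * sine_mode N i' j *
          (2 / real N * (\<Sum>k=1..N-1. sine_mode N i k * sine_mode N i' k)))"
    by (simp add: sum_distrib_left sum_distrib_right mult.commute mult.left_commute)
  also have "\<dots> = 2 / real N * (\<Sum>i'=1..N-1. if i' = i then e i * sine_mode N i j else 0)"
  proof (intro arg_cong[where f = "times (2 / real N)"] sum.cong refl)
    fix i'
    assume "i' \<in> {1..N-1}"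
    then show "e i' * sine_mode N i' j * (2 / real N * (\<Sum>k=1..N-1. sine_mode N i k * sine_mode N i' k))
        = (if i' = i then e i * sine_mode N i j else 0)"
      using sine_mode_orthogonal[OF i] i by auto
  qed
  finally show ?thesis
    using i by (simp add: e_def)
qed

lemma heat_kernel_semigroup:
  "(\<Sum>k=1..N-1. heat_kernel N s n k * heat_kernel N r k j) = heat_kernel N (s + r) n j"
proof -
  have "(\<Sum>k=1..N-1. heat_kernel N s n k * heat_kernel N r k j)
      = (\<Sum>i=1..N-1. 2 / real N * exp (r * sine_eigenvalue N i) * sine_mode N i j
           * exp (s * sine_eigenvalue N i) * sine_mode N i n)"
    unfolding heat_kernel_apply by (intro sum.cong refl) (simp add: sine_coeff_heat_kernel)
  also have "\<dots> = heat_kernel N (s + r) n j"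
    unfolding heat_kernel_def by (simp add: sum_distrib_left algebra_simps exp_add)
  finally show ?thesis .
qed

lemma heat_kernel_sum_square: "(\<Sum>k=1..N-1. (heat_kernel N s n k)\<^sup>2) = heat_kernel N (2 * s) n n"
proof -
  have "(\<Sum>k=1..N-1. (heat_kernel N s n k)\<^sup>2) = (\<Sum>k=1..N-1. heat_kernel N s n k * heat_kernel N s k n)"
  proof (rule sum.cong[OF refl])
    fix k
    show "(heat_kernel N s n k)\<^sup>2 = heat_kernel N s n k * heat_kernel N s k n"
      by (simp only: power2_eq_square heat_kernel_commute[of N s k n])
  qed
  also have "\<dots> = heat_kernel N (s + s) n n"
    by (rule heat_kernel_semigroup)
  finally show ?thesis
    by (simp only: mult_2)
qed

lemma heat_kernel_0_apply:
  assumes "n \<in> {1..N-1}"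
  shows "(\<Sum>k=1..N-1. heat_kernel N 0 n k * v k) = v n"
  unfolding heat_kernel_apply using sine_expansion[OF assms, of v] by simp

lemma heat_kernel_diag_le:
  "heat_kernel N s n n \<le> 2 / real N * (\<Sum>i=1..N-1. exp (s * sine_eigenvalue N i))"
  unfolding heat_kernel_def
proof (intro mult_left_mono sum_mono)
  fix i
  have "(sine_mode N i n)\<^sup>2 \<le> 1"
    unfolding sine_mode_def by (simp add: sin_squared_eq)
  then show "exp (s * sine_eigenvalue N i) * sine_mode N i n * sine_mode N i n \<le> exp (s * sine_eigenvalue N i)"
    using mult_left_mono[of _ 1 "exp (s * sine_eigenvalue N i)"] by (simp add: power2_eq_square mult.assoc)
qed simp

definition euler_step :: "nat \<Rightarrow> real \<Rightarrow> (nat \<Rightarrow> real) \<Rightarrow> nat \<Rightarrow> real" where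
  "euler_step N c v n = v n + c * DN N v n"

lemma euler_step_power_sine_series:
  assumes N: "N > 0" and n: "n \<in> {1..N-1}"
  shows "(euler_step N c ^^ j) v n
       = (\<Sum>i=1..N-1. sine_coeff N v i * (1 + c * sine_eigenvalue N i) ^ j * sine_mode N i n)"
  using n
proof (induction j arbitrary: n)
  case 0
  then show ?case using sine_expansion by simp
next
  case (Suc j)
  define w where "w = (euler_step N c ^^ j) v"
  have "(euler_step N c ^^ Suc j) v n = w n + c * DN N w n"
    by (simp add: euler_step_def w_def)
  also have "DN N w n = (\<Sum>i=1..N-1. (sine_coeff N v i * (1 + c * sine_eigenvalue N i) ^ j)
                                  * sine_eigenvalue N i * sine_mode N i n)"
    by (rule DN_sine_series[OF N Suc.prems]) (use Suc.IH in \<open>simp add: w_def\<close>)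
  also have "w n = (\<Sum>i=1..N-1. sine_coeff N v i * (1 + c * sine_eigenvalue N i) ^ j * sine_mode N i n)"
    using Suc.IH[OF Suc.prems] by (simp add: w_def)
  finally show ?case
    by (simp add: sum_distrib_left sum.distrib[symmetric] algebra_simps)
qed

lemma abs_euler_step_le:
  assumes c: "0 \<le> c" "c \<le> 1/2" and v: "\<And>k. k \<in> {1..N-1} \<Longrightarrow> \<bar>v k\<bar> \<le> B"
    and n: "n \<in> {1..N-1}"
  shows "\<bar>euler_step N c v n\<bar> \<le> B"
proof -
  define a where "a = (if 2 \<le> n then v (n - 1) else 0)"
  define b where "b = (if n + 1 \<le> N - 1 then v (n + 1) else 0)"
  have B: "0 \<le> B" using v[OF n] by linarith
  have a: "\<bar>a\<bar> \<le> B"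
  proof (cases "2 \<le> n")
    case True
    then have "n - 1 \<in> {1..N-1}" using n by auto
    then show ?thesis using v True by (simp add: a_def)
  qed (use B in \<open>simp add: a_def\<close>)
  have b: "\<bar>b\<bar> \<le> B"
    using n B v[of "n + 1"] by (auto simp: b_def)
  have "euler_step N c v n = (1 - 2 * c) * v n + c * a + c * b"
    using n by (simp add: euler_step_def DN_def a_def b_def algebra_simps)
  also have "\<bar>\<dots>\<bar> \<le> (1 - 2 * c) * \<bar>v n\<bar> + c * \<bar>a\<bar> + c * \<bar>b\<bar>"
    using c by (simp add: abs_mult order_trans[OF abs_triangle_ineq] add_mono)
  also have "\<dots> \<le> (1 - 2 * c) * B + c * B + c * B"
    using c a b v[OF n] by (intro add_mono mult_left_mono) auto
  finally show ?thesis by (simp add: algebra_simps)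
qed

(* exp (s D^N) is the limit of (I + s/j D^N)^j, and for s/j <= 1/2 each factor replaces a value
   by a convex combination of it and its neighbours. *)
lemma abs_heat_kernel_apply_le:
  assumes s: "0 \<le> s" and N: "N > 0" and v: "\<And>k. k \<in> {1..N-1} \<Longrightarrow> \<bar>v k\<bar> \<le> B"
    and n: "n \<in> {1..N-1}"
  shows "\<bar>\<Sum>k=1..N-1. heat_kernel N s n k * v k\<bar> \<le> B"
proof -
  define X where "X = (\<lambda>j::nat. (euler_step N (s / real j) ^^ j) v n)"
  have "X \<longlonglongrightarrow> (\<Sum>i=1..N-1. sine_coeff N v i * exp (s * sine_eigenvalue N i) * sine_mode N i n)"
    unfolding X_def euler_step_power_sine_series[OF N n]
    by (intro tendsto_intros) (simp add: tendsto_exp_limit_sequentially)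
  then have lim: "(\<lambda>j. \<bar>X j\<bar>) \<longlonglongrightarrow> \<bar>\<Sum>k=1..N-1. heat_kernel N s n k * v k\<bar>"
    unfolding heat_kernel_apply by (rule tendsto_rabs)
  obtain J :: nat where J: "2 * s + 1 \<le> real J"
    using real_arch_simple by blast
  have "\<bar>X j\<bar> \<le> B" if "J \<le> j" for j
  proof -
    have "2 * s + 1 \<le> real j" using J that by linarith
    then have "s / real j \<le> 1/2" using s by (simp add: field_simps)
    moreover have "\<bar>(euler_step N c ^^ j) v n\<bar> \<le> B" if "0 \<le> c" "c \<le> 1/2" for c
      using n by (induction j arbitrary: n) (auto intro: v abs_euler_step_le[OF that])
    ultimately show ?thesis
      unfolding X_def using s by simp
  qed
  then show ?thesis
    by (intro LIMSEQ_le_const2[OF lim]) blast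
qed

lemma two_div_pi_mult_le_sin:
  assumes "0 \<le> x" "x \<le> pi / 2"
  shows "2 / pi * x \<le> sin x"
proof -
  define f where "f = (\<lambda>x::real. 2 / pi * x - sin x)"
  have "convex_on {0..pi/2} f"
  proof (rule f''_ge0_imp_convex[where f' = "\<lambda>x. 2 / pi - cos x" and f'' = sin])
    show "DERIV f x :> 2 / pi - cos x" for x
      unfolding f_def by (auto intro!: derivative_eq_intros)
    show "DERIV (\<lambda>x. 2 / pi - cos x) x :> sin x" for x
      by (auto intro!: derivative_eq_intros)
    show "x \<in> {0..pi/2} \<Longrightarrow> 0 \<le> sin x" for x
      by (intro sin_ge_zero) auto
  qed simp
  then have "f x \<le> (f (pi/2) - f 0) / (pi/2 - 0) * (x - 0) + f 0"
    by (rule convex_onD_Icc') (use assms in auto)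
  then show ?thesis
    by (simp add: f_def)
qed

lemma sine_eigenvalue_le:
  assumes i: "i \<in> {1..N-1}"
  shows "sine_eigenvalue N i \<le> - 4 * real i ^ 2 / real N ^ 2"
proof -
  have N: "N > 0" using i by auto
  define y where "y = real i * pi / (2 * real N)"
  have y: "0 \<le> y" "y \<le> pi / 2" using i N by (auto simp: y_def field_simps)
  have "cos (real i * pi / real N) = 1 - 2 * (sin y)\<^sup>2"
    using N by (simp add: y_def cos_double_sin[symmetric])
  then have eigenvalue: "sine_eigenvalue N i = - 4 * (sin y)\<^sup>2"
    by (simp add: sine_eigenvalue_def)
  have "2 / pi * y = real i / real N"
    using N by (simp add: y_def field_simps)
  then have "(real i / real N)\<^sup>2 \<le> (sin y)\<^sup>2"
    using two_div_pi_mult_le_sin[OF y] y by (intro power_mono) auto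
  then show ?thesis
    unfolding eigenvalue by (simp add: power_divide)
qed

lemma sum_heat_kernel_square_le:
  assumes "0 \<le> s"
  shows "(\<Sum>k=1..N-1. (heat_kernel N s n k)\<^sup>2) \<le> 2 / real N * (\<Sum>i=1..N-1. exp (- 8 * real i ^ 2 * s / real N ^ 2))"
proof -
  have "(\<Sum>i=1..N-1. exp (2 * s * sine_eigenvalue N i)) \<le> (\<Sum>i=1..N-1. exp (- 8 * real i ^ 2 * s / real N ^ 2))"
  proof (rule sum_mono)
    fix i
    assume "i \<in> {1..N-1}"
    then have "2 * s * sine_eigenvalue N i \<le> 2 * s * (- 4 * real i ^ 2 / real N ^ 2)"
      using assms by (intro mult_left_mono sine_eigenvalue_le) auto
    also have "\<dots> = - 8 * real i ^ 2 * s / real N ^ 2"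
      by simp
    finally show "exp (2 * s * sine_eigenvalue N i) \<le> exp (- 8 * real i ^ 2 * s / real N ^ 2)"
      by simp
  qed
  then show ?thesis
    using heat_kernel_diag_le[of N "2 * s" n] unfolding heat_kernel_sum_square
    by (smt (verit) divide_nonneg_nonneg mult_left_mono of_nat_0_le_iff)
qed

section \<open>A discrete Gronwall inequality with a heat-kernel weight\<close>

lemma sum_exp_decay_le:
  assumes "0 < a"
  shows "(\<Sum>p=1..m. exp (- a * real p)) \<le> 1 / a"
proof -
  define r where "r = exp (- a)"
  have r: "0 < r" "r < 1" using assms by (auto simp: r_def)
  have "(\<Sum>p=1..m. exp (- a * real p)) = (\<Sum>p=1..m. r ^ p)"
    by (simp add: r_def exp_of_nat_mult[symmetric] mult.commute)
  also have "\<dots> \<le> r / (1 - r)"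
  proof (cases "m = 0")
    case False
    then have "(\<Sum>p=1..m. r ^ p) = (r - r ^ Suc m) / (1 - r)"
      using r by (simp add: sum_gp)
    also have "\<dots> \<le> r / (1 - r)"
      using r by (intro divide_right_mono) auto
    finally show ?thesis .
  qed (use r in simp)
  also have "\<dots> = 1 / (exp a - 1)"
    using assms by (simp add: r_def exp_minus field_simps)
  also have "\<dots> \<le> 1 / a"
  proof -
    have "a \<le> exp a - 1"
      using exp_ge_add_one_self[of a] by linarith
    then show ?thesis
      using assms by (intro divide_left_mono) auto
  qed
  finally show ?thesis .
qed

lemma sum_exp_convolution_le:
  assumes "0 < \<tau>" "0 < c + \<rho>"
  shows "(\<Sum>l<m. exp (\<rho> * real l * \<tau>) * exp (- c * \<tau> * real (m - l)))
       \<le> exp (\<rho> * real m * \<tau>) / ((c + \<rho>) * \<tau>)"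
proof -
  have "(\<Sum>l<m. exp (\<rho> * real l * \<tau>) * exp (- c * \<tau> * real (m - l)))
      = exp (\<rho> * real m * \<tau>) * (\<Sum>l<m. exp (- ((c + \<rho>) * \<tau>) * real (m - l)))"
    unfolding sum_distrib_left
    by (intro sum.cong refl) (simp add: of_nat_diff algebra_simps flip: exp_add)
  also have "(\<Sum>l<m. exp (- ((c + \<rho>) * \<tau>) * real (m - l))) = (\<Sum>p=1..m. exp (- ((c + \<rho>) * \<tau>) * real p))"
    by (rule sum.reindex_bij_witness[where i = "\<lambda>p. m - p" and j = "\<lambda>l. m - l"]) auto
  also have "\<dots> \<le> 1 / ((c + \<rho>) * \<tau>)"
    using assms by (intro sum_exp_decay_le) simp
  finally show ?thesis
    by (simp add: divide_inverse mult_left_mono)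
qed

lemma sum_inverse_square_plus_le:
  assumes I: "1 \<le> I" and \<rho>: "0 < \<rho>"
  shows "(\<Sum>i=1..n. 1 / (8 * real i ^ 2 + \<rho>)) \<le> real I / \<rho> + 1 / (8 * real I)"
proof -
  define f where "f i = 1 / (8 * real i ^ 2 + \<rho>)" for i
  define n' where "n' = max n I"
  have f_nonneg: "0 \<le> f i" for i
    using \<rho> by (simp add: f_def add_nonneg_pos less_imp_le)
  have "(\<Sum>i=1..n. f i) \<le> (\<Sum>i=1..n'. f i)"
    by (intro sum_mono2) (auto simp: f_nonneg n'_def)
  also have "\<dots> = (\<Sum>i=1..I. f i) + (\<Sum>i=Suc I..n'. f i)"
    by (subst sum.union_disjoint[symmetric]) (auto intro!: sum.cong simp: n'_def)
  also have "(\<Sum>i=1..I. f i) \<le> (\<Sum>i=1..I. 1 / \<rho>)"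
    using \<rho> by (intro sum_mono) (simp add: f_def frac_le)
  also have "(\<Sum>i=Suc I..n'. f i) \<le> (\<Sum>i=Suc I..n'. (- 1 / (8 * real i)) - (- 1 / (8 * real (i - 1))))"
  proof (rule sum_mono)
    fix i
    assume "i \<in> {Suc I..n'}"
    then have i: "2 \<le> real i" using I by auto
    have "f i \<le> 1 / (8 * (real i * (real i - 1)))"
      unfolding f_def using i \<rho> by (intro frac_le) (auto simp: power2_eq_square algebra_simps)
    also have "\<dots> = (- 1 / (8 * real i)) - (- 1 / (8 * real (i - 1)))"
      using i by (simp add: of_nat_diff field_simps)
    finally show "f i \<le> (- 1 / (8 * real i)) - (- 1 / (8 * real (i - 1)))" .
  qed
  also have "\<dots> = - 1 / (8 * real n') - (- 1 / (8 * real I))"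
    by (rule sum_telescope'') (simp add: n'_def)
  finally have "(\<Sum>i=1..n. f i) \<le> real I / \<rho> + 1 / (8 * real I) - 1 / (8 * real n')"
    by simp
  moreover have "0 \<le> 1 / (8 * real n')"
    by simp
  ultimately have "(\<Sum>i=1..n. f i) \<le> real I / \<rho> + 1 / (8 * real I)"
    by linarith
  then show ?thesis
    by (simp add: f_def)
qed

(* Splitting sum_i 1 / (8 i^2 + rho) at i = ceil kappa + 1 shows that this rate makes
   4 kappa sum_i 1 / (8 i^2 + rho) <= 1 for any number of modes. *)
definition gronwall_rate :: "real \<Rightarrow> real" where
  "gronwall_rate \<kappa> = 8 * \<kappa> * real (nat \<lceil>\<kappa>\<rceil> + 1) + 1"

lemma gronwall_rate_pos: "0 \<le> \<kappa> \<Longrightarrow> 0 < gronwall_rate \<kappa>"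
  unfolding gronwall_rate_def by (simp add: add_nonneg_pos)

lemma gronwall_rate_sum_le:
  assumes \<kappa>: "0 \<le> \<kappa>"
  shows "4 * \<kappa> * (\<Sum>i=1..n. 1 / (8 * real i ^ 2 + gronwall_rate \<kappa>)) \<le> 1"
proof -
  define I where "I = nat \<lceil>\<kappa>\<rceil> + 1"
  have I: "1 \<le> I" "\<kappa> \<le> real I" unfolding I_def by auto linarith
  have rate: "gronwall_rate \<kappa> = 8 * \<kappa> * real I + 1"
    by (simp add: gronwall_rate_def I_def)
  have "4 * \<kappa> * (\<Sum>i=1..n. 1 / (8 * real i ^ 2 + gronwall_rate \<kappa>))
      \<le> 4 * \<kappa> * (real I / gronwall_rate \<kappa> + 1 / (8 * real I))"
    using \<kappa> sum_inverse_square_plus_le[OF I(1) gronwall_rate_pos[OF \<kappa>]] by (intro mult_left_mono) auto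
  also have "\<dots> = 4 * \<kappa> * real I / (8 * \<kappa> * real I + 1) + \<kappa> / (2 * real I)"
    using I by (simp add: rate field_simps)
  also have "\<dots> \<le> 1/2 + 1/2"
  proof (rule add_mono)
    show "4 * \<kappa> * real I / (8 * \<kappa> * real I + 1) \<le> 1/2"
      using \<kappa> I by (simp add: divide_le_eq add_nonneg_pos)
    show "\<kappa> / (2 * real I) \<le> 1/2"
      using I by (simp add: divide_le_eq)
  qed
  finally show ?thesis by simp
qed

lemma gronwall_rate_convolution_le:
  assumes \<tau>: "0 < \<tau>" and \<kappa>: "0 \<le> \<kappa>"
  shows "4 * \<kappa> * \<tau> * (\<Sum>i=1..d. \<Sum>l<m. exp (gronwall_rate \<kappa> * real l * \<tau>) * exp (- (8 * real i ^ 2) * \<tau> * real (m - l)))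
       \<le> exp (gronwall_rate \<kappa> * real m * \<tau>)"
proof -
  define \<rho> where "\<rho> = gronwall_rate \<kappa>"
  define E where "E = exp (\<rho> * real m * \<tau>)"
  have \<rho>: "0 < \<rho>"
    using gronwall_rate_pos[OF \<kappa>] by (simp add: \<rho>_def)
  have "4 * \<kappa> * \<tau> * (\<Sum>i=1..d. \<Sum>l<m. exp (\<rho> * real l * \<tau>) * exp (- (8 * real i ^ 2) * \<tau> * real (m - l)))
      \<le> 4 * \<kappa> * \<tau> * (\<Sum>i=1..d. E / ((8 * real i ^ 2 + \<rho>) * \<tau>))"
    unfolding E_def using \<kappa> \<tau> \<rho>
    by (intro mult_left_mono sum_mono sum_exp_convolution_le) (auto intro: add_nonneg_pos)
  also have "\<dots> = E * (4 * \<kappa> * (\<Sum>i=1..d. 1 / (8 * real i ^ 2 + \<rho>)))"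
    unfolding sum_distrib_left
  proof (intro sum.cong refl)
    fix i
    define c where "c = 8 * real i ^ 2 + \<rho>"
    have "0 < c" using \<rho> by (simp add: c_def add_nonneg_pos)
    then show "4 * \<kappa> * \<tau> * (E / ((8 * real i ^ 2 + \<rho>) * \<tau>)) = E * (4 * \<kappa> * (1 / (8 * real i ^ 2 + \<rho>)))"
      using \<tau> unfolding c_def[symmetric] by (simp add: field_simps)
  qed
  also have "\<dots> \<le> E"
    using gronwall_rate_sum_le[OF \<kappa>, of d] by (simp add: \<rho>_def E_def mult_left_le)
  finally show ?thesis
    by (simp add: \<rho>_def E_def)
qed

lemma discrete_gronwall_heat_weight:
  fixes Q :: "nat \<Rightarrow> nat \<Rightarrow> real" and w :: "nat \<Rightarrow> nat \<Rightarrow> nat \<Rightarrow> real" and K :: "nat set"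
  assumes \<tau>: "0 < \<tau>" and \<kappa>: "0 \<le> \<kappa>" and A: "0 \<le> A"
    and w_nonneg: "\<And>p n k. 0 \<le> w p n k"
    and w_sum: "\<And>p n. n \<in> K \<Longrightarrow>
      (\<Sum>k\<in>K. w p n k) \<le> 2 * \<kappa> * \<tau> * (\<Sum>i=1..d. exp (- (8 * real i ^ 2) * \<tau> * real p))"
    and Q: "\<And>m n. n \<in> K \<Longrightarrow> Q m n \<le> A + (\<Sum>l<m. \<Sum>k\<in>K. w (m - l) n k * Q l k)"
  shows "n \<in> K \<Longrightarrow> Q m n \<le> 2 * A * exp (gronwall_rate \<kappa> * real m * \<tau>)"
proof (induction m arbitrary: n rule: less_induct)
  case (less m)
  define \<rho> where "\<rho> = gronwall_rate \<kappa>"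
  define H where "H l i = exp (\<rho> * real l * \<tau>) * exp (- (8 * real i ^ 2) * \<tau> * real (m - l))" for l i
  have "(\<Sum>k\<in>K. w (m - l) n k * Q l k) \<le> A * (4 * \<kappa> * \<tau> * (\<Sum>i=1..d. H l i))" if "l < m" for l
  proof -
    have "(\<Sum>k\<in>K. w (m - l) n k * Q l k) \<le> (\<Sum>k\<in>K. w (m - l) n k * (2 * A * exp (\<rho> * real l * \<tau>)))"
      using less.IH[OF that] by (intro sum_mono mult_left_mono w_nonneg) (simp add: \<rho>_def)
    also have "\<dots> = 2 * A * exp (\<rho> * real l * \<tau>) * (\<Sum>k\<in>K. w (m - l) n k)"
      by (simp add: sum_distrib_right mult.commute)
    also have "\<dots> \<le> 2 * A * exp (\<rho> * real l * \<tau>) *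
        (2 * \<kappa> * \<tau> * (\<Sum>i=1..d. exp (- (8 * real i ^ 2) * \<tau> * real (m - l))))"
      using A by (intro mult_left_mono w_sum less.prems) simp
    finally show ?thesis
      by (simp add: H_def sum_distrib_left mult_ac)
  qed
  then have "(\<Sum>l<m. \<Sum>k\<in>K. w (m - l) n k * Q l k) \<le> (\<Sum>l<m. A * (4 * \<kappa> * \<tau> * (\<Sum>i=1..d. H l i)))"
    by (intro sum_mono) simp
  also have "\<dots> = A * (4 * \<kappa> * \<tau> * (\<Sum>i=1..d. \<Sum>l<m. H l i))"
    by (simp only: sum_distrib_left) (rule sum.swap)
  also have "\<dots> \<le> A * exp (\<rho> * real m * \<tau>)"
    unfolding H_def \<rho>_def using A by (intro mult_left_mono gronwall_rate_convolution_le \<tau> \<kappa>)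
  finally have "Q m n \<le> A + A * exp (\<rho> * real m * \<tau>)"
    using Q[OF less.prems, of m] by linarith
  also have "\<dots> \<le> 2 * A * exp (\<rho> * real m * \<tau>)"
    using A gronwall_rate_pos[OF \<kappa>] \<tau> mult_left_mono[of 1 "exp (\<rho> * real m * \<tau>)" A]
    by (simp add: \<rho>_def)
  finally show ?case
    by (simp add: \<rho>_def)
qed

section \<open>Exponential moments of Brownian sheet increments\<close>

lemma normal_density_mult_exp:
  assumes "0 < s"
  shows "normal_density 0 s x * exp x = exp (s\<^sup>2 / 2) * normal_density (s\<^sup>2) s x"
proof -
  have "- (x - 0)\<^sup>2 / (2 * s\<^sup>2) + x = s\<^sup>2 / 2 + (- (x - s\<^sup>2)\<^sup>2 / (2 * s\<^sup>2))"
    using assms by (simp add: field_simps power2_eq_square)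
  then show ?thesis
    unfolding normal_density_def by (simp add: mult.commute mult.left_commute flip: exp_add)
qed

lemma centered_gaussian_exp:
  assumes P: "prob_space P" and Y: "centered_gaussian P Y v"
  shows "integrable P (\<lambda>\<omega>. exp (Y \<omega>)) \<and> prob_space.expectation P (\<lambda>\<omega>. exp (Y \<omega>)) = exp (v / 2)"
proof -
  interpret prob_space P by (rule P)
  have Y_meas: "Y \<in> borel_measurable P" using Y by (simp add: centered_gaussian_def)
  from Y consider "v = 0" "AE \<omega> in P. Y \<omega> = 0"
    | "v > 0" "distributed P lborel Y (normal_density 0 (sqrt v))"
    unfolding centered_gaussian_def by blast
  then show ?thesis
  proof cases
    case 1
    have ae: "AE \<omega> in P. exp (Y \<omega>) = 1"
      using 1(2) by eventually_elim simp
    have "integrable P (\<lambda>\<omega>. exp (Y \<omega>))"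
      by (rule integrable_cong_AE_imp[OF _ _ ae[THEN AE_mp, OF AE_I2]]) (use Y_meas in auto)
    moreover have "expectation (\<lambda>\<omega>. exp (Y \<omega>)) = expectation (\<lambda>\<omega>. 1)"
      by (rule integral_cong_AE) (use Y_meas ae in auto)
    ultimately show ?thesis using 1 by (simp add: prob_space)
  next
    case 2
    define s where "s = sqrt v"
    have s: "0 < s" "s\<^sup>2 = v" using 2 by (auto simp: s_def)
    have D: "distributed P lborel Y (normal_density 0 s)" using 2 by (simp add: s_def)
    have shift: "(\<lambda>x. normal_density 0 s x * exp x) = (\<lambda>x. exp (s\<^sup>2 / 2) * normal_density (s\<^sup>2) s x)"
      using normal_density_mult_exp[OF s(1)] by auto
    have "integrable lborel (\<lambda>x. normal_density 0 s x * exp x)"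
      unfolding shift using s by (intro integrable_mult_right integrable_normal_density) auto
    then have "integrable P (\<lambda>\<omega>. exp (Y \<omega>))"
      using distributed_integrable[OF D, of exp] by simp
    moreover have "expectation (\<lambda>\<omega>. exp (Y \<omega>)) = (\<integral>x. normal_density 0 s x * exp x \<partial>lborel)"
      by (rule distributed_integral[OF D, symmetric]) auto
    moreover have "(\<integral>x. normal_density 0 s x * exp x \<partial>lborel) = exp (s\<^sup>2 / 2)"
      unfolding shift using s integral_normal_density[of s "s\<^sup>2"] by simp
    ultimately show ?thesis using s by simp
  qed
qed

definition sheet_rectangle :: "(real \<Rightarrow> real \<Rightarrow> 'a \<Rightarrow> real) \<Rightarrow> real \<Rightarrow> real \<Rightarrow> real \<Rightarrow> real \<Rightarrow> 'a \<Rightarrow> real" where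
  "sheet_rectangle W s r x y \<omega> = W r y \<omega> - W s y \<omega> - W r x \<omega> + W s x \<omega>"

lemma brownian_sheet_two_rectangles_gaussian:
  assumes BS: "brownian_sheet P F W" and s: "0 \<le> s" "s \<le> r"
    and x: "0 \<le> x1" "x1 \<le> x2" "x2 \<le> y1" "y1 \<le> y2" "y2 \<le> 1"
  shows "centered_gaussian P (\<lambda>\<omega>. A * sheet_rectangle W s r x1 x2 \<omega> + B * sheet_rectangle W s r y1 y2 \<omega>)
           ((r - s) * (A\<^sup>2 * (x2 - x1) + B\<^sup>2 * (y2 - y1)))"
proof -
  \<comment> \<open>the two rectangle increments as a combination of eight values of W\<close>
  define ts where "ts = (\<lambda>i. [r, r, s, s, r, r, s, s] ! i)"
  define xs where "xs = (\<lambda>i. [x2, x1, x2, x1, y2, y1, y2, y1] ! i)"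
  define c where "c = (\<lambda>i. [A, -A, -A, A, B, -B, -B, B] ! i)"
  have "\<forall>i<8. 0 \<le> ts i \<and> 0 \<le> xs i \<and> xs i \<le> 1"
    using s x by (simp add: numeral_eq_Suc less_Suc_eq ts_def xs_def)
  then have gaussian: "centered_gaussian P (\<lambda>\<omega>. \<Sum>i<8. c i * W (ts i) (xs i) \<omega>)
      (\<Sum>i<8. \<Sum>j<8. c i * c j * min (ts i) (ts j) * min (xs i) (xs j))"
    using BS unfolding brownian_sheet_def by blast
  have "min r s = s" "min s r = s" "min x2 x1 = x1" "min x1 x2 = x1" "min y2 y1 = y1" "min y1 y2 = y1"
    "min x2 y2 = x2" "min y2 x2 = x2" "min x2 y1 = x2" "min y1 x2 = x2"
    "min x1 y2 = x1" "min y2 x1 = x1" "min x1 y1 = x1" "min y1 x1 = x1"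
    using s x by (auto simp: min_def)
  then have "(\<Sum>i<8. \<Sum>j<8. c i * c j * min (ts i) (ts j) * min (xs i) (xs j))
      = (r - s) * (A\<^sup>2 * (x2 - x1) + B\<^sup>2 * (y2 - y1))"
    by (simp add: numeral_eq_Suc lessThan_Suc c_def ts_def xs_def power2_eq_square)
      (simp add: algebra_simps)
  moreover have "(\<lambda>\<omega>. \<Sum>i<8. c i * W (ts i) (xs i) \<omega>)
      = (\<lambda>\<omega>. A * sheet_rectangle W s r x1 x2 \<omega> + B * sheet_rectangle W s r y1 y2 \<omega>)"
    by (simp add: numeral_eq_Suc lessThan_Suc c_def ts_def xs_def sheet_rectangle_def algebra_simps)
  ultimately show ?thesis
    using gaussian by simp
qed

definition WN_increment :: "(real \<Rightarrow> real \<Rightarrow> 'a \<Rightarrow> real) \<Rightarrow> nat \<Rightarrow> real \<Rightarrow> real \<Rightarrow> nat \<Rightarrow> 'a \<Rightarrow> real" where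
  "WN_increment W N s r k \<omega> = WN W N r k \<omega> - WN W N s k \<omega>"

lemma WN_increment_eq_sheet_rectangle:
  "WN_increment W N s r k \<omega> = sqrt (real N) * sheet_rectangle W s r (real k / real N) (real (Suc k) / real N) \<omega>"
  by (simp add: WN_increment_def WN_def sheet_rectangle_def algebra_simps)

lemma WN_increment_pair_gaussian:
  assumes BS: "brownian_sheet P F W" and s: "0 \<le> s" "s \<le> r" and kj: "k < j" "j < N"
  shows "centered_gaussian P (\<lambda>\<omega>. a * WN_increment W N s r k \<omega> + b * WN_increment W N s r j \<omega>)
           ((a\<^sup>2 + b\<^sup>2) * (r - s))"
proof -
  have N: "0 < real N" using kj by simp
  have scale: "(c * sqrt (real N))\<^sup>2 * (real (Suc i) / real N - real i / real N) = c\<^sup>2" for c i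
    using N by (simp add: power_mult_distrib flip: diff_divide_distrib)
  have "real k / real N \<le> real (Suc k) / real N" "real (Suc k) / real N \<le> real j / real N"
    "real j / real N \<le> real (Suc j) / real N" "real (Suc j) / real N \<le> 1"
    using kj by (simp_all add: divide_right_mono)
  then have "centered_gaussian P
      (\<lambda>\<omega>. (a * sqrt (real N)) * sheet_rectangle W s r (real k / real N) (real (Suc k) / real N) \<omega>
           + (b * sqrt (real N)) * sheet_rectangle W s r (real j / real N) (real (Suc j) / real N) \<omega>)
      ((r - s) * ((a * sqrt (real N))\<^sup>2 * (real (Suc k) / real N - real k / real N)
                 + (b * sqrt (real N))\<^sup>2 * (real (Suc j) / real N - real j / real N)))"
    by (intro brownian_sheet_two_rectangles_gaussian[OF BS s]) simp_all
  then show ?thesis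
    unfolding scale WN_increment_eq_sheet_rectangle by (simp add: mult_ac)
qed

lemma WN_increment_gaussian:
  assumes BS: "brownian_sheet P F W" and s: "0 \<le> s" "s \<le> r" and k: "k < N"
  shows "centered_gaussian P (\<lambda>\<omega>. a * WN_increment W N s r k \<omega>) (a\<^sup>2 * (r - s))"
proof -
  have N: "0 < real N" using k by simp
  have scale: "(a * sqrt (real N))\<^sup>2 * (real (Suc k) / real N - real k / real N) = a\<^sup>2"
    using N by (simp add: power_mult_distrib flip: diff_divide_distrib)
  \<comment> \<open>pair the increment with the degenerate rectangle at x = 1\<close>
  have "real k / real N \<le> real (Suc k) / real N" "real (Suc k) / real N \<le> 1"
    using k by (simp_all add: divide_right_mono)
  then have "centered_gaussian P
      (\<lambda>\<omega>. (a * sqrt (real N)) * sheet_rectangle W s r (real k / real N) (real (Suc k) / real N) \<omega>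
           + 0 * sheet_rectangle W s r 1 1 \<omega>)
      ((r - s) * ((a * sqrt (real N))\<^sup>2 * (real (Suc k) / real N - real k / real N) + 0\<^sup>2 * (1 - 1)))"
    by (intro brownian_sheet_two_rectangles_gaussian[OF BS s]) simp_all
  then show ?thesis
    unfolding scale WN_increment_eq_sheet_rectangle by (simp add: mult_ac)
qed

lemma exp_WN_increment_pair:
  assumes P: "prob_space P" and BS: "brownian_sheet P F W" and s: "0 \<le> s" "s \<le> r"
    and kj: "k \<noteq> j" "k < N" "j < N"
  shows "integrable P (\<lambda>\<omega>. exp (a * WN_increment W N s r k \<omega> + b * WN_increment W N s r j \<omega>)) \<and>
         prob_space.expectation P (\<lambda>\<omega>. exp (a * WN_increment W N s r k \<omega> + b * WN_increment W N s r j \<omega>))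
           = exp ((a\<^sup>2 + b\<^sup>2) * (r - s) / 2)"
proof (cases "k < j")
  case True
  then show ?thesis
    using centered_gaussian_exp[OF P WN_increment_pair_gaussian[OF BS s True kj(3)]] by simp
next
  case False
  then have "j < k" using kj by simp
  then show ?thesis
    using centered_gaussian_exp[OF P WN_increment_pair_gaussian[OF BS s _ kj(2), of j b a]]
    by (simp add: add.commute)
qed

lemma exp_WN_increment:
  assumes P: "prob_space P" and BS: "brownian_sheet P F W" and s: "0 \<le> s" "s \<le> r" and k: "k < N"
  shows "integrable P (\<lambda>\<omega>. exp (a * WN_increment W N s r k \<omega>)) \<and>
         prob_space.expectation P (\<lambda>\<omega>. exp (a * WN_increment W N s r k \<omega>)) = exp (a\<^sup>2 * (r - s) / 2)"
  using centered_gaussian_exp[OF P WN_increment_gaussian[OF BS s k]] by simp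

section \<open>Independence of the past and the future increments\<close>

lemma (in prob_space) indep_var_if_indep_set:
  assumes ind: "indep_set (sets MA) (sets MB)"
    and space: "space MA = space M" "space MB = space M"
    and X: "X \<in> measurable MA MX" and Z: "Z \<in> measurable MB MZ"
  shows "indep_var MX X MZ Z"
proof -
  have events: "sets MA \<subseteq> events" "sets MB \<subseteq> events"
    using ind by (simp_all add: indep_sets2_eq)
  then have "subalgebra M MA" "subalgebra M MB"
    using space by (simp_all add: subalgebra_def)
  then have rv: "random_variable MX X" "random_variable MZ Z"
    using X Z by (simp_all add: measurable_from_subalg)
  have sub_X: "sigma_sets (space M) {X -` A \<inter> space M | A. A \<in> sets MX} \<subseteq> sets MA"
    using X space sets.sigma_algebra_axioms[of MA]
    by (intro sigma_algebra.sigma_sets_subset) (auto simp: measurable_def)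
  have sub_Z: "sigma_sets (space M) {Z -` A \<inter> space M | A. A \<in> sets MZ} \<subseteq> sets MB"
    using Z space sets.sigma_algebra_axioms[of MB]
    by (intro sigma_algebra.sigma_sets_subset) (auto simp: measurable_def)
  have "indep_sets (case_bool (sigma_sets (space M) {X -` A \<inter> space M | A. A \<in> sets MX})
      (sigma_sets (space M) {Z -` A \<inter> space M | A. A \<in> sets MZ})) UNIV"
    using ind unfolding indep_set_def
  proof (rule indep_sets_mono_sets)
    fix i :: bool
    show "case_bool (sigma_sets (space M) {X -` A \<inter> space M | A. A \<in> sets MX})
        (sigma_sets (space M) {Z -` A \<inter> space M | A. A \<in> sets MZ}) i \<subseteq> case_bool (sets MA) (sets MB) i"
      using sub_X sub_Z by (cases i) simp_all
  qed
  then show ?thesis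
    using rv by (simp add: indep_var_eq indep_set_def)
qed

lemma (in prob_space) integral_distr_section:
  fixes f :: "'b \<times> 'c \<Rightarrow> real"
  assumes Z: "Z \<in> measurable M MZ" and f: "f \<in> borel_measurable (MX \<Otimes>\<^sub>M MZ)"
  shows "(\<lambda>x. \<integral>z. f (x, z) \<partial>distr M MZ Z) \<in> borel_measurable MX"
    and "x \<in> space MX \<Longrightarrow> (\<integral>z. f (x, z) \<partial>distr M MZ Z) = (\<integral>\<omega>. f (x, Z \<omega>) \<partial>M)"
proof -
  interpret DZ: prob_space "distr M MZ Z"
    using Z by (rule prob_space_distr)
  show "(\<lambda>x. \<integral>z. f (x, z) \<partial>distr M MZ Z) \<in> borel_measurable MX"
    using DZ.borel_measurable_lebesgue_integral[of "\<lambda>x z. f (x, z)" MX] f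
    by (simp add: measurable_cong_sets[OF sets_pair_measure_cong[OF refl], of "distr M MZ Z" MZ])
  show "x \<in> space MX \<Longrightarrow> (\<integral>z. f (x, z) \<partial>distr M MZ Z) = (\<integral>\<omega>. f (x, Z \<omega>) \<partial>M)"
    by (intro integral_distr[OF Z] measurable_Pair2[OF f])
qed

lemma (in prob_space) integral_indep_var_freeze:
  fixes \<Phi> :: "'b \<times> 'b \<Rightarrow> real"
  assumes ind: "indep_var MX X MZ Z"
    and \<Phi>[measurable]: "\<Phi> \<in> borel_measurable (MX \<Otimes>\<^sub>M MZ)"
    and inner: "\<And>x. x \<in> space MX \<Longrightarrow> integrable M (\<lambda>\<omega>. \<Phi> (x, Z \<omega>))"
    and outer: "integrable M (\<lambda>\<omega>. \<integral>\<omega>'. \<bar>\<Phi> (X \<omega>, Z \<omega>')\<bar> \<partial>M)"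
  shows "integrable M (\<lambda>\<omega>. \<Phi> (X \<omega>, Z \<omega>))"
    and "expectation (\<lambda>\<omega>. \<Phi> (X \<omega>, Z \<omega>)) = expectation (\<lambda>\<omega>. \<integral>\<omega>'. \<Phi> (X \<omega>, Z \<omega>') \<partial>M)"
proof -
  have X[measurable]: "X \<in> measurable M MX" using indep_var_rv1[OF ind] .
  have Z[measurable]: "Z \<in> measurable M MZ" using indep_var_rv2[OF ind] .
  define DX where "DX = distr M MX X"
  define DZ where "DZ = distr M MZ Z"
  interpret DX: prob_space DX unfolding DX_def by (rule prob_space_distr) simp
  interpret DZ: prob_space DZ unfolding DZ_def by (rule prob_space_distr) simp
  have product: "DX \<Otimes>\<^sub>M DZ = distr M (MX \<Otimes>\<^sub>M MZ) (\<lambda>\<omega>. (X \<omega>, Z \<omega>))"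
    using indep_var_distribution_eq[THEN iffD1, OF ind] by (simp add: DX_def DZ_def)
  interpret DXZ: pair_prob_space DX DZ ..
  have sets_DXZ: "sets (DX \<Otimes>\<^sub>M DZ) = sets (MX \<Otimes>\<^sub>M MZ)"
    by (intro sets_pair_measure_cong) (simp_all add: DX_def DZ_def)
  have \<Phi>_DXZ: "\<Phi> \<in> borel_measurable (DX \<Otimes>\<^sub>M DZ)"
    using \<Phi> by (simp add: measurable_cong_sets[OF sets_DXZ refl])
  have abs_\<Phi>: "(\<lambda>p. \<bar>\<Phi> p\<bar>) \<in> borel_measurable (MX \<Otimes>\<^sub>M MZ)"
    by measurable
  note integral_DZ = integral_distr_section[OF Z, folded DZ_def]
  have "integrable M (\<lambda>\<omega>. \<integral>z. \<bar>\<Phi> (X \<omega>, z)\<bar> \<partial>DZ)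
      \<longleftrightarrow> integrable M (\<lambda>\<omega>. \<integral>\<omega>'. \<bar>\<Phi> (X \<omega>, Z \<omega>')\<bar> \<partial>M)"
    by (rule Bochner_Integration.integrable_cong[OF refl]) (simp add: integral_DZ(2)[OF abs_\<Phi>] measurable_space[OF X])
  then have "integrable DX (\<lambda>x. \<integral>z. norm (\<Phi> (x, z)) \<partial>DZ)"
    using outer integral_DZ(1)[OF abs_\<Phi>] unfolding DX_def by (simp add: integrable_distr_eq)
  moreover have "AE x in DX. integrable DZ (\<lambda>z. \<Phi> (x, z))"
    using inner by (intro AE_I2) (simp add: DX_def DZ_def integrable_distr_eq)
  ultimately have int: "integrable (DX \<Otimes>\<^sub>M DZ) \<Phi>"
    by (rule DXZ.Fubini_integrable[OF \<Phi>_DXZ])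
  then show "integrable M (\<lambda>\<omega>. \<Phi> (X \<omega>, Z \<omega>))"
    unfolding product by (simp add: integrable_distr_eq)
  have "expectation (\<lambda>\<omega>. \<Phi> (X \<omega>, Z \<omega>)) = integral\<^sup>L (DX \<Otimes>\<^sub>M DZ) \<Phi>"
    unfolding product by (simp add: integral_distr)
  also have "\<dots> = (\<integral>x. (\<integral>z. \<Phi> (x, z) \<partial>DZ) \<partial>DX)"
    by (rule DXZ.integral_fst'[OF int, symmetric])
  also have "\<dots> = expectation (\<lambda>\<omega>. \<integral>\<omega>'. \<Phi> (X \<omega>, Z \<omega>') \<partial>M)"
    unfolding DX_def integral_distr[OF X integral_DZ(1)[OF \<Phi>]]
    by (rule Bochner_Integration.integral_cong[OF refl]) (simp add: integral_DZ(2)[OF \<Phi>] measurable_space[OF X])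
  finally show "expectation (\<lambda>\<omega>. \<Phi> (X \<omega>, Z \<omega>)) = expectation (\<lambda>\<omega>. \<integral>\<omega>'. \<Phi> (X \<omega>, Z \<omega>') \<partial>M)" .
qed

definition increments_after :: "'a measure \<Rightarrow> (real \<Rightarrow> real \<Rightarrow> 'a \<Rightarrow> real) \<Rightarrow> real \<Rightarrow> 'a measure" where
  "increments_after P W s = sigma (space P)
     (\<Union>r\<in>{s..}. \<Union>x\<in>{0..1}. {(\<lambda>\<omega>. W r x \<omega> - W s x \<omega>) -` B \<inter> space P | B. B \<in> sets borel})"

lemma space_increments_after [simp]: "space (increments_after P W s) = space P"
  by (simp add: increments_after_def space_measure_of_conv)

lemma sets_increments_after:
  "sets (increments_after P W s) = sigma_sets (space P)
     (\<Union>r\<in>{s..}. \<Union>x\<in>{0..1}. {(\<lambda>\<omega>. W r x \<omega> - W s x \<omega>) -` B \<inter> space P | B. B \<in> sets borel})"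
  unfolding increments_after_def by (rule sets_measure_of) auto

lemma brownian_sheet_indep_increments_after:
  assumes "brownian_sheet P F W" "0 \<le> s"
  shows "prob_space.indep_set P (sets (F s)) (sets (increments_after P W s))"
  using assms unfolding brownian_sheet_def sets_increments_after by simp

lemma measurable_increments_after:
  assumes "s \<le> r" "0 \<le> x" "x \<le> 1"
  shows "(\<lambda>\<omega>. W r x \<omega> - W s x \<omega>) \<in> borel_measurable (increments_after P W s)"
proof (rule measurableI)
  fix B :: "real set"
  assume "B \<in> sets borel"
  then have "(\<lambda>\<omega>. W r x \<omega> - W s x \<omega>) -` B \<inter> space P
      \<in> (\<Union>r\<in>{s..}. \<Union>x\<in>{0..1}. {(\<lambda>\<omega>. W r x \<omega> - W s x \<omega>) -` B \<inter> space P | B. B \<in> sets borel})"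
    using assms by (intro UN_I[of r] UN_I[of x]) auto
  then show "(\<lambda>\<omega>. W r x \<omega> - W s x \<omega>) -` B \<inter> space (increments_after P W s) \<in> sets (increments_after P W s)"
    unfolding sets_increments_after space_increments_after by (rule sigma_sets.Basic)
qed simp

lemma WN_increment_measurable_after:
  assumes "s \<le> r" "k < N"
  shows "WN_increment W N s r k \<in> borel_measurable (increments_after P W s)"
proof -
  have "WN_increment W N s r k = (\<lambda>\<omega>. sqrt (real N) *
      ((W r (real (Suc k) / real N) \<omega> - W s (real (Suc k) / real N) \<omega>)
       - (W r (real k / real N) \<omega> - W s (real k / real N) \<omega>)))"
    by (simp add: fun_eq_iff WN_increment_eq_sheet_rectangle sheet_rectangle_def)
  moreover note [measurable] =
    measurable_increments_after[of s r "real k / real N" W P]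
    measurable_increments_after[of s r "real (Suc k) / real N" W P]
  ultimately show ?thesis
    using assms by simp
qed

lemma brownian_sheet_subalgebra:
  assumes "brownian_sheet P F W" "s \<le> t"
  shows "subalgebra (F t) (F s)"
proof -
  interpret filtration "space P" F
    using assms(1) by (simp add: brownian_sheet_def)
  show ?thesis
    unfolding subalgebra_def using sets_F_mono[OF assms(2)] space_F by auto
qed

lemma brownian_sheet_measurable:
  assumes "brownian_sheet P F W" "0 \<le> r" "r \<le> t" "0 \<le> x" "x \<le> 1"
  shows "W r x \<in> borel_measurable (F t)"
proof (rule measurable_from_subalg)
  show "subalgebra (F t) (F r)"
    using assms by (intro brownian_sheet_subalgebra)
  show "W r x \<in> borel_measurable (F r)"
    using assms by (simp add: brownian_sheet_def)
qed

lemma exp_minus_one_le_mult_exp: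
  fixes x :: real
  assumes "0 \<le> x"
  shows "exp x - 1 \<le> x * exp x"
proof -
  have "(1 - x) * exp x \<le> exp (- x) * exp x"
    using exp_ge_add_one_self[of "- x"] by (intro mult_right_mono) simp_all
  then show ?thesis
    by (simp add: algebra_simps flip: exp_add)
qed

lemma brownian_sheet_indep_var:
  assumes P: "prob_space P" and BS: "brownian_sheet P F W" and s: "0 \<le> s"
    and X: "X \<in> measurable (F s) MX" and Z: "Z \<in> measurable (increments_after P W s) MZ"
  shows "prob_space.indep_var P MX X MZ Z"
proof -
  interpret filtration "space P" F
    using BS by (simp add: brownian_sheet_def)
  show ?thesis
    by (rule prob_space.indep_var_if_indep_set[OF P brownian_sheet_indep_increments_after[OF BS s]
          space_F space_increments_after X Z])
qed

section \<open>Second moments of the Lie--Trotter scheme\<close>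

lemma fq_abs_le:
  assumes L: "L-lipschitz_on UNIV g" and g0: "g 0 = 0"
  shows "\<bar>fq g v\<bar> \<le> max L \<bar>deriv g 0\<bar>"
proof (cases "v = 0")
  case False
  have "dist (g v) (g 0) \<le> L * dist v 0"
    by (rule lipschitz_onD[OF L]) auto
  then have "\<bar>g v / v\<bar> \<le> L"
    using g0 False by (simp add: dist_real_def abs_divide divide_le_eq)
  then show ?thesis
    using False by (simp add: fq_def)
qed (simp add: fq_def)

lemma fq_measurable:
  assumes "L-lipschitz_on UNIV g"
  shows "fq g \<in> borel_measurable borel"
proof -
  have [measurable]: "g \<in> borel_measurable borel"
    using borel_measurable_continuous_onI lipschitz_on_continuous_on[OF assms] by blast
  have "(\<lambda>v. if v = 0 then deriv g 0 else g v / v) \<in> borel_measurable borel"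
    by measurable
  then show ?thesis
    by (simp add: fq_def[abs_def])
qed

lemma abs_le_sup_norm01:
  assumes "continuous_on {0..1} u" "x \<in> {0..1}"
  shows "\<bar>u x\<bar> \<le> sup_norm01 u"
proof -
  have "compact ((\<lambda>x. \<bar>u x\<bar>) ` {0..1::real})"
    using assms(1) by (intro compact_continuous_image continuous_on_rabs) simp_all
  then have "bdd_above ((\<lambda>x. \<bar>u x\<bar>) ` {0..1::real})"
    by (intro bounded_imp_bdd_above compact_imp_bounded)
  then show ?thesis
    unfolding sup_norm01_def using assms(2) by (intro cSup_upper) auto
qed

lemma C3_on_unit_imp_continuous: "C3_on_unit u \<Longrightarrow> continuous_on {0..1} u"
  unfolding C3_on_unit_def continuous_on_eq_continuous_within
  by (metis DERIV_continuous)

lemma integrable_le_mult_of_square_integrable: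
  fixes f g G :: "'a \<Rightarrow> real"
  assumes f: "integrable M (\<lambda>\<omega>. (f \<omega>)\<^sup>2)" and g: "integrable M (\<lambda>\<omega>. (g \<omega>)\<^sup>2)"
    and G: "G \<in> borel_measurable M" and c: "0 \<le> c" and le: "\<And>\<omega>. \<bar>G \<omega>\<bar> \<le> c * \<bar>f \<omega> * g \<omega>\<bar>"
  shows "integrable M G"
proof (rule Bochner_Integration.integrable_bound[OF _ G])
  show "integrable M (\<lambda>\<omega>. c * ((f \<omega>)\<^sup>2 + (g \<omega>)\<^sup>2))"
    using f g by simp
  show "AE \<omega> in M. norm (G \<omega>) \<le> norm (c * ((f \<omega>)\<^sup>2 + (g \<omega>)\<^sup>2))"
  proof (rule AE_I2)
    fix \<omega>
    have "2 * \<bar>f \<omega> * g \<omega>\<bar> \<le> (f \<omega>)\<^sup>2 + (g \<omega>)\<^sup>2"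
      using sum_squares_bound[of "\<bar>f \<omega>\<bar>" "\<bar>g \<omega>\<bar>"] by (simp add: abs_mult mult.assoc)
    then have "\<bar>f \<omega> * g \<omega>\<bar> \<le> (f \<omega>)\<^sup>2 + (g \<omega>)\<^sup>2"
      using abs_ge_zero[of "f \<omega> * g \<omega>"] by linarith
    then have "\<bar>G \<omega>\<bar> \<le> c * ((f \<omega>)\<^sup>2 + (g \<omega>)\<^sup>2)"
      using le[of \<omega>] mult_left_mono[OF _ c] order_trans by blast
    then show "norm (G \<omega>) \<le> norm (c * ((f \<omega>)\<^sup>2 + (g \<omega>)\<^sup>2))"
      using c by simp
  qed
qed

lemma integral_sum_square:
  fixes A :: "nat \<Rightarrow> 'a \<Rightarrow> real"
  assumes int: "\<And>k j. k \<in> K \<Longrightarrow> j \<in> K \<Longrightarrow> integrable M (\<lambda>\<omega>. A k \<omega> * A j \<omega>)"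
  shows "integrable M (\<lambda>\<omega>. (\<Sum>k\<in>K. A k \<omega>)\<^sup>2)"
    and "(\<integral>\<omega>. (\<Sum>k\<in>K. A k \<omega>)\<^sup>2 \<partial>M) = (\<Sum>k\<in>K. \<Sum>j\<in>K. \<integral>\<omega>. A k \<omega> * A j \<omega> \<partial>M)"
proof -
  have square: "(\<lambda>\<omega>. (\<Sum>k\<in>K. A k \<omega>)\<^sup>2) = (\<lambda>\<omega>. \<Sum>k\<in>K. \<Sum>j\<in>K. A k \<omega> * A j \<omega>)"
    by (simp add: power2_eq_square sum_product)
  have row: "integrable M (\<lambda>\<omega>. \<Sum>j\<in>K. A k \<omega> * A j \<omega>)" if "k \<in> K" for k
    using int that by (intro Bochner_Integration.integrable_sum) auto
  show "integrable M (\<lambda>\<omega>. (\<Sum>k\<in>K. A k \<omega>)\<^sup>2)"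
    unfolding square by (rule Bochner_Integration.integrable_sum) (rule row)
  have "(\<integral>\<omega>. (\<Sum>k\<in>K. A k \<omega>)\<^sup>2 \<partial>M) = (\<Sum>k\<in>K. \<integral>\<omega>. (\<Sum>j\<in>K. A k \<omega> * A j \<omega>) \<partial>M)"
    unfolding square using row by (rule Bochner_Integration.integral_sum)
  also have "\<dots> = (\<Sum>k\<in>K. \<Sum>j\<in>K. \<integral>\<omega>. A k \<omega> * A j \<omega> \<partial>M)"
    using int by (intro sum.cong refl Bochner_Integration.integral_sum) auto
  finally show "(\<integral>\<omega>. (\<Sum>k\<in>K. A k \<omega>)\<^sup>2 \<partial>M) = (\<Sum>k\<in>K. \<Sum>j\<in>K. \<integral>\<omega>. A k \<omega> * A j \<omega> \<partial>M)" .
qed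

lemma sum_sum_mult_add_diagonal:
  fixes c d :: "'i \<Rightarrow> real" and e :: "'i \<Rightarrow> 'i \<Rightarrow> real"
  assumes "finite K"
  shows "(\<Sum>k\<in>K. \<Sum>j\<in>K. c k * c j * (e k j + (if k = j then d k else 0)))
       = (\<Sum>k\<in>K. \<Sum>j\<in>K. c k * c j * e k j) + (\<Sum>k\<in>K. (c k)\<^sup>2 * d k)"
proof -
  have "(\<Sum>j\<in>K. c k * c j * (if k = j then d k else 0)) = (c k)\<^sup>2 * d k" if "k \<in> K" for k
  proof -
    have "(\<Sum>j\<in>K. c k * c j * (if k = j then d k else 0)) = (\<Sum>j\<in>K. if j = k then (c k)\<^sup>2 * d k else 0)"
      by (intro sum.cong) (auto simp: power2_eq_square)
    then show ?thesis
      using assms that by simp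
  qed
  then show ?thesis
    by (simp add: distrib_left sum.distrib)
qed

definition variance_rate :: "real \<Rightarrow> real \<Rightarrow> real" where
  "variance_rate L \<gamma> = L\<^sup>2 * exp (L\<^sup>2 * \<gamma>)"

definition increment_constant :: "real \<Rightarrow> real \<Rightarrow> real \<Rightarrow> real" where
  "increment_constant L \<gamma> T =
     sqrt (2 * variance_rate L \<gamma> * exp (gronwall_rate (variance_rate L \<gamma>) * T)) + 1"

lemma variance_rate_nonneg: "0 \<le> variance_rate L \<gamma>"
  by (simp add: variance_rate_def)

lemma increment_constant_pos: "0 < increment_constant L \<gamma> T"
  unfolding increment_constant_def using variance_rate_nonneg by (intro add_nonneg_pos) simp_all

abbreviation seq_borel :: "(nat \<Rightarrow> real) measure" where
  "seq_borel \<equiv> Pi\<^sub>M UNIV (\<lambda>_. borel)"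

locale lie_trotter =
  fixes P :: "'a measure" and F :: "real \<Rightarrow> 'a measure" and W :: "real \<Rightarrow> real \<Rightarrow> 'a \<Rightarrow> real"
    and g u0 :: "real \<Rightarrow> real" and T :: real and M N :: nat and L :: real
  assumes prob: "prob_space P" and sheet: "brownian_sheet P F W"
    and T: "0 < T" and M: "0 < M" and N: "0 < N"
    and fq_measurable: "fq g \<in> borel_measurable borel" and fq_bound: "\<And>v. \<bar>fq g v\<bar> \<le> L"
begin

definition "\<tau> = T / real M"

definition "t_grid m = real m * \<tau>"

definition "u m k \<omega> = LT g u0 W T M N m k \<omega>"

(* u_(m,.) as a single F_(t_m)-measurable random sequence (entries outside 1..N-1 are 0);
   split_factor m r k is the factor xi by which the stochastic step multiplies u_(m,k) on [t_m, r],
   and split_variance m r k is the conditional expectation of ((xi - 1) u_(m,k))^2 given F_(t_m). *)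
definition "u_vec m \<omega> = (\<lambda>k. if k \<in> {1..N-1} then u m k \<omega> else 0)"

definition "split_factor m r k \<omega> =
  exp (sqrt (real N) * fq g (u m k \<omega>) * WN_increment W N (t_grid m) r k \<omega>
       - real N * (fq g (u m k \<omega>))\<^sup>2 * (r - t_grid m) / 2)"

definition "split_variance m r k \<omega> = (exp (real N * (fq g (u m k \<omega>))\<^sup>2 * (r - t_grid m)) - 1) * (u m k \<omega>)\<^sup>2"

lemma \<tau>_pos: "0 < \<tau>"
  using T M by (simp add: \<tau>_def)

lemma t_grid_nonneg: "0 \<le> t_grid m"
  using \<tau>_pos by (simp add: t_grid_def)

lemma t_grid_mono: "m \<le> m' \<Longrightarrow> t_grid m \<le> t_grid m'"
  using \<tau>_pos by (simp add: t_grid_def mult_right_mono)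

lemma t_grid_Suc: "t_grid (Suc m) = t_grid m + \<tau>"
  by (simp add: t_grid_def algebra_simps)

lemma fq_square_le: "(fq g v)\<^sup>2 \<le> L\<^sup>2"
  using power_mono[OF fq_bound[of v] abs_ge_zero, of 2] by simp

lemma u_0: "u 0 k \<omega> = u0 (real k / real N)"
  by (simp add: u_def)

lemma u_Suc:
  assumes "n \<in> {1..N-1}"
  shows "u (Suc m) n \<omega>
       = (\<Sum>k=1..N-1. heat_kernel N (\<tau> * real N ^ 2) n k * (split_factor m (t_grid (Suc m)) k \<omega> * u m k \<omega>))"
proof -
  have "split_factor m (t_grid (Suc m)) k \<omega> = exp (sqrt (real N) * fq g (u m k \<omega>) *
      (WN W N (t_grid (Suc m)) k \<omega> - WN W N (t_grid m) k \<omega>) - real N * (fq g (u m k \<omega>))\<^sup>2 * \<tau> / 2)" for k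
    by (simp add: split_factor_def WN_increment_def t_grid_Suc)
  then have "u (Suc m) n \<omega> = expD N (\<tau> * real N ^ 2) (\<lambda>k. split_factor m (t_grid (Suc m)) k \<omega> * u m k \<omega>) n"
    unfolding u_def LT.simps t_grid_def \<tau>_def by (simp add: mult.commute)
  then show ?thesis
    using expD_eq_heat_kernel[OF N assms] by simp
qed

lemma u_measurable: "k \<in> {1..N-1} \<Longrightarrow> u m k \<in> borel_measurable (F (t_grid m))"
proof (induction m arbitrary: k)
  case 0
  then show ?case by (simp add: u_0)
next
  case (Suc m)
  have [measurable]: "fq g \<in> borel_measurable borel"
    by (rule fq_measurable)
  have factor: "(\<lambda>\<omega>. split_factor m (t_grid (Suc m)) k' \<omega> * u m k' \<omega>) \<in> borel_measurable (F (t_grid (Suc m)))"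
    if k': "k' \<in> {1..N-1}" for k'
  proof -
    have x: "0 \<le> real k' / real N" "real k' / real N \<le> 1" "0 \<le> real (Suc k') / real N" "real (Suc k') / real N \<le> 1"
      using k' by auto
    note W = brownian_sheet_measurable[OF sheet t_grid_nonneg]
    note [measurable] =
      measurable_from_subalg[OF brownian_sheet_subalgebra[OF sheet t_grid_mono] Suc.IH[OF k'], of "Suc m"]
      W[OF t_grid_mono x(1,2), of m "Suc m"] W[OF t_grid_mono x(3,4), of m "Suc m"]
      W[OF order.refl x(1,2)] W[OF order.refl x(3,4)]
    show ?thesis
      unfolding split_factor_def WN_increment_def WN_def by measurable
  qed
  show ?case
    unfolding u_Suc[OF Suc.prems, abs_def] using factor by (intro borel_measurable_sum) (simp add: mult.assoc)
qed

lemma u_vec_measurable: "u_vec m \<in> measurable (F (t_grid m)) seq_borel"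
  unfolding u_vec_def[abs_def]
proof (intro measurable_abs_UNIV)
  fix k
  show "(\<lambda>\<omega>. if k \<in> {1..N-1} then u m k \<omega> else 0) \<in> borel_measurable (F (t_grid m))"
    using u_measurable[of k m] by (cases "k \<in> {1..N-1}") auto
qed

lemma u_measurable_P: "k \<in> {1..N-1} \<Longrightarrow> u m k \<in> borel_measurable P"
  using measurable_from_subalg[OF _ u_measurable] sheet
  by (auto simp: subalgebra_def brownian_sheet_def filtration_def)

lemma u_vec_apply: "k \<in> {1..N-1} \<Longrightarrow> u_vec m \<omega> k = u m k \<omega>"
  by (simp add: u_vec_def)

(* The increments after t_m are independent of u_vec m, so they can be integrated out with
   u_vec m frozen; the Gaussian moment then cancels the compensator exp (- v / 2). *)
lemma expectation_stochastic_exponential: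
  fixes h a b v :: "(nat \<Rightarrow> real) \<Rightarrow> real"
  assumes r: "t_grid m \<le> r" and kj: "k < N" "j < N"
    and [measurable]: "h \<in> borel_measurable seq_borel" "a \<in> borel_measurable seq_borel"
      "b \<in> borel_measurable seq_borel" "v \<in> borel_measurable seq_borel"
    and moment: "\<And>x. integrable P (\<lambda>\<omega>. exp (a x * WN_increment W N (t_grid m) r k \<omega>
                                             + b x * WN_increment W N (t_grid m) r j \<omega>))
      \<and> prob_space.expectation P (\<lambda>\<omega>. exp (a x * WN_increment W N (t_grid m) r k \<omega>
                                          + b x * WN_increment W N (t_grid m) r j \<omega>)) = exp (v x / 2)"
    and int: "integrable P (\<lambda>\<omega>. h (u_vec m \<omega>))"
  defines "E x \<omega> \<equiv> exp (a x * WN_increment W N (t_grid m) r k \<omega> + b x * WN_increment W N (t_grid m) r j \<omega> - v x / 2)"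
  shows "integrable P (\<lambda>\<omega>. h (u_vec m \<omega>) * E (u_vec m \<omega>) \<omega>)"
    and "prob_space.expectation P (\<lambda>\<omega>. h (u_vec m \<omega>) * E (u_vec m \<omega>) \<omega>)
       = prob_space.expectation P (\<lambda>\<omega>. h (u_vec m \<omega>))"
proof -
  interpret prob_space P by (rule prob)
  define Z where "Z \<omega> = (\<lambda>i::nat. if i = 0 then WN_increment W N (t_grid m) r k \<omega>
                                       else WN_increment W N (t_grid m) r j \<omega>)" for \<omega>
  define \<Phi> where "\<Phi> p = h (fst p) * exp (a (fst p) * snd p 0 + b (fst p) * snd p 1 - v (fst p) / 2)"
    for p :: "(nat \<Rightarrow> real) \<times> (nat \<Rightarrow> real)"
  have "Z \<in> measurable (increments_after P W (t_grid m)) seq_borel"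
    unfolding Z_def[abs_def]
  proof (intro measurable_abs_UNIV)
    fix i :: nat
    show "(\<lambda>\<omega>. if i = 0 then WN_increment W N (t_grid m) r k \<omega> else WN_increment W N (t_grid m) r j \<omega>)
        \<in> borel_measurable (increments_after P W (t_grid m))"
      using WN_increment_measurable_after[OF r kj(1)] WN_increment_measurable_after[OF r kj(2)]
      by (cases "i = 0") simp_all
  qed
  then have ind: "indep_var seq_borel (u_vec m) seq_borel Z"
    by (rule brownian_sheet_indep_var[OF prob sheet t_grid_nonneg u_vec_measurable])
  have \<Phi>_measurable: "\<Phi> \<in> borel_measurable (seq_borel \<Otimes>\<^sub>M seq_borel)"
    unfolding \<Phi>_def by measurable
  have \<Phi>_Z: "\<Phi> (x, Z \<omega>) = h x * exp (a x * WN_increment W N (t_grid m) r k \<omega> + b x * WN_increment W N (t_grid m) r j \<omega>)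
                              * exp (- (v x / 2))"
    for x \<omega> by (simp add: \<Phi>_def Z_def algebra_simps flip: exp_add)
  have inner: "integrable P (\<lambda>\<omega>. \<Phi> (x, Z \<omega>))" "expectation (\<lambda>\<omega>. \<Phi> (x, Z \<omega>)) = h x" for x
    using moment[of x] by (simp_all add: \<Phi>_Z mult.assoc exp_minus_inverse)
  have "expectation (\<lambda>\<omega>'. \<bar>\<Phi> (x, Z \<omega>')\<bar>) = \<bar>h x\<bar>" for x
    using moment[of x] by (simp add: \<Phi>_Z abs_mult mult.assoc exp_minus_inverse)
  then have outer: "integrable P (\<lambda>\<omega>. expectation (\<lambda>\<omega>'. \<bar>\<Phi> (u_vec m \<omega>, Z \<omega>')\<bar>))"
    using integrable_abs[OF int] by simp
  note freeze = integral_indep_var_freeze[OF ind \<Phi>_measurable inner(1) outer]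
  have "\<Phi> (u_vec m \<omega>, Z \<omega>) = h (u_vec m \<omega>) * E (u_vec m \<omega>) \<omega>" for \<omega>
    by (simp add: \<Phi>_def Z_def E_def)
  with freeze show "integrable P (\<lambda>\<omega>. h (u_vec m \<omega>) * E (u_vec m \<omega>) \<omega>)"
    and "expectation (\<lambda>\<omega>. h (u_vec m \<omega>) * E (u_vec m \<omega>) \<omega>) = expectation (\<lambda>\<omega>. h (u_vec m \<omega>))"
    by (simp_all add: inner(2))
qed

lemma expectation_mult_split_factor:
  assumes r: "t_grid m \<le> r" and k: "k \<in> {1..N-1}"
    and h[measurable]: "h \<in> borel_measurable seq_borel" and int: "integrable P (\<lambda>\<omega>. h (u_vec m \<omega>))"
  shows "integrable P (\<lambda>\<omega>. h (u_vec m \<omega>) * split_factor m r k \<omega>)"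
    and "prob_space.expectation P (\<lambda>\<omega>. h (u_vec m \<omega>) * split_factor m r k \<omega>)
       = prob_space.expectation P (\<lambda>\<omega>. h (u_vec m \<omega>))"
proof -
  define a where "a x = sqrt (real N) * fq g (x k)" for x :: "nat \<Rightarrow> real"
  have [measurable]: "fq g \<in> borel_measurable borel"
    by (rule fq_measurable)
  have kN: "k < N" using k by auto
  have a: "a \<in> borel_measurable seq_borel"
    unfolding a_def[abs_def] by measurable
  then have v: "(\<lambda>x. (a x)\<^sup>2 * (r - t_grid m)) \<in> borel_measurable seq_borel"
    by measurable
  have moment: "integrable P (\<lambda>\<omega>. exp (a x * WN_increment W N (t_grid m) r k \<omega> + 0 * WN_increment W N (t_grid m) r k \<omega>))
      \<and> prob_space.expectation P (\<lambda>\<omega>. exp (a x * WN_increment W N (t_grid m) r k \<omega> + 0 * WN_increment W N (t_grid m) r k \<omega>))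
        = exp ((a x)\<^sup>2 * (r - t_grid m) / 2)" for x
    using exp_WN_increment[OF prob sheet t_grid_nonneg r kN, of "a x"] by simp
  note freeze = expectation_stochastic_exponential[OF r kN kN h a borel_measurable_const v moment int]
  have "exp (a (u_vec m \<omega>) * WN_increment W N (t_grid m) r k \<omega> + 0 * WN_increment W N (t_grid m) r k \<omega>
      - (a (u_vec m \<omega>))\<^sup>2 * (r - t_grid m) / 2) = split_factor m r k \<omega>" for \<omega>
    using k by (simp add: split_factor_def a_def u_vec_apply power_mult_distrib)
  with freeze show "integrable P (\<lambda>\<omega>. h (u_vec m \<omega>) * split_factor m r k \<omega>)"
    and "prob_space.expectation P (\<lambda>\<omega>. h (u_vec m \<omega>) * split_factor m r k \<omega>)
       = prob_space.expectation P (\<lambda>\<omega>. h (u_vec m \<omega>))"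
    by simp_all
qed

lemma expectation_mult_split_factor_pair:
  assumes r: "t_grid m \<le> r" and k: "k \<in> {1..N-1}" and j: "j \<in> {1..N-1}" and "k \<noteq> j"
    and h[measurable]: "h \<in> borel_measurable seq_borel" and int: "integrable P (\<lambda>\<omega>. h (u_vec m \<omega>))"
  shows "integrable P (\<lambda>\<omega>. h (u_vec m \<omega>) * (split_factor m r k \<omega> * split_factor m r j \<omega>))"
    and "prob_space.expectation P (\<lambda>\<omega>. h (u_vec m \<omega>) * (split_factor m r k \<omega> * split_factor m r j \<omega>))
       = prob_space.expectation P (\<lambda>\<omega>. h (u_vec m \<omega>))"
proof -
  define a where "a i x = sqrt (real N) * fq g (x i)" for i and x :: "nat \<Rightarrow> real"
  have [measurable]: "fq g \<in> borel_measurable borel"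
    by (rule fq_measurable)
  have kN: "k < N" and jN: "j < N" using k j by auto
  have a: "a i \<in> borel_measurable seq_borel" for i
    unfolding a_def[abs_def] by measurable
  have v: "(\<lambda>x. ((a k x)\<^sup>2 + (a j x)\<^sup>2) * (r - t_grid m)) \<in> borel_measurable seq_borel"
    using a[of k] a[of j] by measurable
  have moment: "integrable P (\<lambda>\<omega>. exp (a k x * WN_increment W N (t_grid m) r k \<omega>
                                         + a j x * WN_increment W N (t_grid m) r j \<omega>))
      \<and> prob_space.expectation P (\<lambda>\<omega>. exp (a k x * WN_increment W N (t_grid m) r k \<omega>
                                              + a j x * WN_increment W N (t_grid m) r j \<omega>))
        = exp (((a k x)\<^sup>2 + (a j x)\<^sup>2) * (r - t_grid m) / 2)" for x
    by (rule exp_WN_increment_pair[OF prob sheet t_grid_nonneg r \<open>k \<noteq> j\<close> kN jN])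
  note freeze = expectation_stochastic_exponential[OF r kN jN h a a v moment int]
  have "exp (a k (u_vec m \<omega>) * WN_increment W N (t_grid m) r k \<omega> + a j (u_vec m \<omega>) * WN_increment W N (t_grid m) r j \<omega>
      - ((a k (u_vec m \<omega>))\<^sup>2 + (a j (u_vec m \<omega>))\<^sup>2) * (r - t_grid m) / 2)
      = split_factor m r k \<omega> * split_factor m r j \<omega>" for \<omega>
    using k j by (simp add: split_factor_def a_def u_vec_apply power_mult_distrib field_simps flip: exp_add)
  with freeze show "integrable P (\<lambda>\<omega>. h (u_vec m \<omega>) * (split_factor m r k \<omega> * split_factor m r j \<omega>))"
    and "prob_space.expectation P (\<lambda>\<omega>. h (u_vec m \<omega>) * (split_factor m r k \<omega> * split_factor m r j \<omega>))
       = prob_space.expectation P (\<lambda>\<omega>. h (u_vec m \<omega>))"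
    by simp_all
qed

lemma expectation_mult_split_factor_square:
  assumes r: "t_grid m \<le> r" and k: "k \<in> {1..N-1}" and h[measurable]: "h \<in> borel_measurable seq_borel"
    and int: "integrable P (\<lambda>\<omega>. h (u_vec m \<omega>) * exp (real N * (fq g (u m k \<omega>))\<^sup>2 * (r - t_grid m)))"
  shows "integrable P (\<lambda>\<omega>. h (u_vec m \<omega>) * (split_factor m r k \<omega>)\<^sup>2)"
    and "prob_space.expectation P (\<lambda>\<omega>. h (u_vec m \<omega>) * (split_factor m r k \<omega>)\<^sup>2)
       = prob_space.expectation P (\<lambda>\<omega>. h (u_vec m \<omega>) * exp (real N * (fq g (u m k \<omega>))\<^sup>2 * (r - t_grid m)))"
proof -
  define a where "a x = 2 * sqrt (real N) * fq g (x k)" for x :: "nat \<Rightarrow> real"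
  define h' where "h' x = h x * exp (real N * (fq g (x k))\<^sup>2 * (r - t_grid m))" for x
  have [measurable]: "fq g \<in> borel_measurable borel"
    by (rule fq_measurable)
  have kN: "k < N" using k by auto
  have h': "h' \<in> borel_measurable seq_borel"
    unfolding h'_def[abs_def] by measurable
  have a: "a \<in> borel_measurable seq_borel"
    unfolding a_def[abs_def] by measurable
  then have v: "(\<lambda>x. (a x)\<^sup>2 * (r - t_grid m)) \<in> borel_measurable seq_borel"
    by measurable
  have moment: "integrable P (\<lambda>\<omega>. exp (a x * WN_increment W N (t_grid m) r k \<omega> + 0 * WN_increment W N (t_grid m) r k \<omega>))
      \<and> prob_space.expectation P (\<lambda>\<omega>. exp (a x * WN_increment W N (t_grid m) r k \<omega> + 0 * WN_increment W N (t_grid m) r k \<omega>))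
        = exp ((a x)\<^sup>2 * (r - t_grid m) / 2)" for x
    using exp_WN_increment[OF prob sheet t_grid_nonneg r kN, of "a x"] by simp
  have "integrable P (\<lambda>\<omega>. h' (u_vec m \<omega>))"
    using int k by (simp add: h'_def u_vec_apply)
  note freeze = expectation_stochastic_exponential[OF r kN kN h' a borel_measurable_const v moment this]
  have "h' (u_vec m \<omega>) * exp (a (u_vec m \<omega>) * WN_increment W N (t_grid m) r k \<omega> + 0 * WN_increment W N (t_grid m) r k \<omega>
      - (a (u_vec m \<omega>))\<^sup>2 * (r - t_grid m) / 2) = h (u_vec m \<omega>) * (split_factor m r k \<omega>)\<^sup>2" for \<omega>
    using k by (simp add: split_factor_def a_def h'_def u_vec_apply power_mult_distrib mult.assoc
        flip: exp_add exp_of_nat_mult)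
  moreover have "h' (u_vec m \<omega>) = h (u_vec m \<omega>) * exp (real N * (fq g (u m k \<omega>))\<^sup>2 * (r - t_grid m))" for \<omega>
    using k by (simp add: h'_def u_vec_apply)
  ultimately show "integrable P (\<lambda>\<omega>. h (u_vec m \<omega>) * (split_factor m r k \<omega>)\<^sup>2)"
    and "prob_space.expectation P (\<lambda>\<omega>. h (u_vec m \<omega>) * (split_factor m r k \<omega>)\<^sup>2)
       = prob_space.expectation P (\<lambda>\<omega>. h (u_vec m \<omega>) * exp (real N * (fq g (u m k \<omega>))\<^sup>2 * (r - t_grid m)))"
    using freeze by (simp_all only:)
qed

lemma u_product_integrable:
  assumes "k \<in> {1..N-1}" "j \<in> {1..N-1}"
    and "integrable P (\<lambda>\<omega>. (u m k \<omega>)\<^sup>2)" "integrable P (\<lambda>\<omega>. (u m j \<omega>)\<^sup>2)"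
  shows "integrable P (\<lambda>\<omega>. u m k \<omega> * u m j \<omega>)"
proof (rule integrable_le_mult_of_square_integrable[where c = 1 and f = "u m k" and g = "u m j"])
  show "(\<lambda>\<omega>. u m k \<omega> * u m j \<omega>) \<in> borel_measurable P"
    by (intro borel_measurable_times u_measurable_P assms(1,2))
qed (use assms in simp_all)

lemma split_variance_integrable:
  assumes r: "t_grid m \<le> r" and k: "k \<in> {1..N-1}" and int: "integrable P (\<lambda>\<omega>. (u m k \<omega>)\<^sup>2)"
  shows "integrable P (\<lambda>\<omega>. (u m k \<omega>)\<^sup>2 * exp (real N * (fq g (u m k \<omega>))\<^sup>2 * (r - t_grid m)))"
    and "integrable P (split_variance m r k)"
proof -
  have [measurable]: "fq g \<in> borel_measurable borel" "u m k \<in> borel_measurable P"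
    using k by (simp_all add: fq_measurable u_measurable_P)
  have bound: "\<bar>(u m k \<omega>)\<^sup>2 * exp (real N * (fq g (u m k \<omega>))\<^sup>2 * (r - t_grid m))\<bar>
      \<le> exp (real N * L\<^sup>2 * (r - t_grid m)) * \<bar>u m k \<omega> * u m k \<omega>\<bar>" for \<omega>
  proof -
    have "real N * (fq g (u m k \<omega>))\<^sup>2 * (r - t_grid m) \<le> real N * L\<^sup>2 * (r - t_grid m)"
      using r fq_square_le by (simp add: mult_left_mono mult_right_mono)
    then have "exp (real N * (fq g (u m k \<omega>))\<^sup>2 * (r - t_grid m)) * \<bar>u m k \<omega> * u m k \<omega>\<bar>
        \<le> exp (real N * L\<^sup>2 * (r - t_grid m)) * \<bar>u m k \<omega> * u m k \<omega>\<bar>"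
      by (intro mult_right_mono) simp_all
    then show ?thesis
      by (simp add: abs_mult power2_eq_square mult.commute)
  qed
  show "integrable P (\<lambda>\<omega>. (u m k \<omega>)\<^sup>2 * exp (real N * (fq g (u m k \<omega>))\<^sup>2 * (r - t_grid m)))"
  proof (rule integrable_le_mult_of_square_integrable[OF int int _ _ bound])
    show "(\<lambda>\<omega>. (u m k \<omega>)\<^sup>2 * exp (real N * (fq g (u m k \<omega>))\<^sup>2 * (r - t_grid m))) \<in> borel_measurable P"
      by measurable
  qed (rule exp_ge_zero)
  with int show "integrable P (split_variance m r k)"
    unfolding split_variance_def[abs_def] by (simp add: algebra_simps)
qed

lemma expectation_split_square:
  assumes r: "t_grid m \<le> r" and k: "k \<in> {1..N-1}" and int: "integrable P (\<lambda>\<omega>. (u m k \<omega>)\<^sup>2)"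
  shows "integrable P (\<lambda>\<omega>. (split_factor m r k \<omega> * u m k \<omega>)\<^sup>2)"
    and "prob_space.expectation P (\<lambda>\<omega>. (split_factor m r k \<omega> * u m k \<omega>)\<^sup>2)
       = prob_space.expectation P (\<lambda>\<omega>. (u m k \<omega>)\<^sup>2) + prob_space.expectation P (split_variance m r k)"
proof -
  interpret prob_space P by (rule prob)
  have u_vec_k: "u_vec m \<omega> k = u m k \<omega>" for \<omega>
    using k by (rule u_vec_apply)
  have meas: "(\<lambda>x::nat \<Rightarrow> real. (x k)\<^sup>2) \<in> borel_measurable seq_borel"
    by measurable
  have "integrable P (\<lambda>\<omega>. (u_vec m \<omega> k)\<^sup>2 * exp (real N * (fq g (u m k \<omega>))\<^sup>2 * (r - t_grid m)))"
    using split_variance_integrable(1)[OF r k int] by (simp add: u_vec_k)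
  note square = expectation_mult_split_factor_square[OF r k meas this]
  have "expectation (\<lambda>\<omega>. (u m k \<omega>)\<^sup>2 * exp (real N * (fq g (u m k \<omega>))\<^sup>2 * (r - t_grid m)))
      = expectation (\<lambda>\<omega>. (u m k \<omega>)\<^sup>2) + expectation (split_variance m r k)"
    using split_variance_integrable[OF r k int] int
    by (simp add: split_variance_def algebra_simps flip: Bochner_Integration.integral_add)
  with square show "integrable P (\<lambda>\<omega>. (split_factor m r k \<omega> * u m k \<omega>)\<^sup>2)"
    and "expectation (\<lambda>\<omega>. (split_factor m r k \<omega> * u m k \<omega>)\<^sup>2)
       = expectation (\<lambda>\<omega>. (u m k \<omega>)\<^sup>2) + expectation (split_variance m r k)"
    by (simp_all add: u_vec_k power_mult_distrib mult.commute)
qed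

lemma expectation_split_product_off_diagonal:
  assumes r: "t_grid m \<le> r" and k: "k \<in> {1..N-1}" and j: "j \<in> {1..N-1}" and "k \<noteq> j"
    and int: "integrable P (\<lambda>\<omega>. (u m k \<omega>)\<^sup>2)" "integrable P (\<lambda>\<omega>. (u m j \<omega>)\<^sup>2)"
  shows "integrable P (\<lambda>\<omega>. (split_factor m r k \<omega> * u m k \<omega>) * (split_factor m r j \<omega> * u m j \<omega>))"
    and "prob_space.expectation P (\<lambda>\<omega>. (split_factor m r k \<omega> * u m k \<omega>) * (split_factor m r j \<omega> * u m j \<omega>))
       = prob_space.expectation P (\<lambda>\<omega>. u m k \<omega> * u m j \<omega>)"
proof -
  have meas: "(\<lambda>x::nat \<Rightarrow> real. x k * x j) \<in> borel_measurable seq_borel"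
    by measurable
  have "integrable P (\<lambda>\<omega>. u_vec m \<omega> k * u_vec m \<omega> j)"
    using u_product_integrable[OF k j int] k j by (simp add: u_vec_apply)
  note pair = expectation_mult_split_factor_pair[OF r k j \<open>k \<noteq> j\<close> meas this]
  from pair show "integrable P (\<lambda>\<omega>. (split_factor m r k \<omega> * u m k \<omega>) * (split_factor m r j \<omega> * u m j \<omega>))"
    and "prob_space.expectation P (\<lambda>\<omega>. (split_factor m r k \<omega> * u m k \<omega>) * (split_factor m r j \<omega> * u m j \<omega>))
       = prob_space.expectation P (\<lambda>\<omega>. u m k \<omega> * u m j \<omega>)"
    using k j by (simp_all add: u_vec_apply mult_ac)
qed

lemma expectation_split_product:
  assumes r: "t_grid m \<le> r" and k: "k \<in> {1..N-1}" and j: "j \<in> {1..N-1}"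
    and int: "\<And>k. k \<in> {1..N-1} \<Longrightarrow> integrable P (\<lambda>\<omega>. (u m k \<omega>)\<^sup>2)"
  shows "integrable P (\<lambda>\<omega>. (split_factor m r k \<omega> * u m k \<omega>) * (split_factor m r j \<omega> * u m j \<omega>))"
    and "prob_space.expectation P (\<lambda>\<omega>. (split_factor m r k \<omega> * u m k \<omega>) * (split_factor m r j \<omega> * u m j \<omega>))
       = prob_space.expectation P (\<lambda>\<omega>. u m k \<omega> * u m j \<omega>)
         + (if k = j then prob_space.expectation P (split_variance m r k) else 0)"
  using expectation_split_square[OF r k int[OF k]] expectation_split_product_off_diagonal[OF r k j _ int[OF k] int[OF j]]
  by (cases "k = j"; simp add: power2_eq_square)+

lemma second_moment_split:
  assumes r: "t_grid m \<le> r" and int: "\<And>k. k \<in> {1..N-1} \<Longrightarrow> integrable P (\<lambda>\<omega>. (u m k \<omega>)\<^sup>2)"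
  shows "integrable P (\<lambda>\<omega>. (\<Sum>k=1..N-1. c k * (split_factor m r k \<omega> * u m k \<omega>))\<^sup>2)"
    and "prob_space.expectation P (\<lambda>\<omega>. (\<Sum>k=1..N-1. c k * (split_factor m r k \<omega> * u m k \<omega>))\<^sup>2)
       = prob_space.expectation P (\<lambda>\<omega>. (\<Sum>k=1..N-1. c k * u m k \<omega>)\<^sup>2)
         + (\<Sum>k=1..N-1. (c k)\<^sup>2 * prob_space.expectation P (split_variance m r k))"
proof -
  interpret prob_space P by (rule prob)
  note product = expectation_split_product[OF r _ _ int]
  have split_int: "integrable P (\<lambda>\<omega>. c k * (split_factor m r k \<omega> * u m k \<omega>) * (c j * (split_factor m r j \<omega> * u m j \<omega>)))"
    if "k \<in> {1..N-1}" "j \<in> {1..N-1}" for k j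
    using integrable_mult_right[OF product(1)[OF that], of "c k * c j"] by (simp add: mult_ac)
  have u_int: "integrable P (\<lambda>\<omega>. c k * u m k \<omega> * (c j * u m j \<omega>))"
    if "k \<in> {1..N-1}" "j \<in> {1..N-1}" for k j
    using integrable_mult_right[OF u_product_integrable[OF that int int], of "c k * c j"] that by (simp add: mult_ac)
  note split_square =
    integral_sum_square[where A = "\<lambda>k \<omega>. c k * (split_factor m r k \<omega> * u m k \<omega>)", OF split_int]
  note u_square = integral_sum_square[where A = "\<lambda>k \<omega>. c k * u m k \<omega>", OF u_int]
  show "integrable P (\<lambda>\<omega>. (\<Sum>k=1..N-1. c k * (split_factor m r k \<omega> * u m k \<omega>))\<^sup>2)"
    by (rule split_square(1))
  have "expectation (\<lambda>\<omega>. (\<Sum>k=1..N-1. c k * (split_factor m r k \<omega> * u m k \<omega>))\<^sup>2)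
      = (\<Sum>k=1..N-1. \<Sum>j=1..N-1. expectation (\<lambda>\<omega>. c k * (split_factor m r k \<omega> * u m k \<omega>)
                                                 * (c j * (split_factor m r j \<omega> * u m j \<omega>))))"
    by (rule split_square(2))
  also have "\<dots> = (\<Sum>k=1..N-1. \<Sum>j=1..N-1. c k * c j * (expectation (\<lambda>\<omega>. u m k \<omega> * u m j \<omega>)
          + (if k = j then expectation (split_variance m r k) else 0)))"
  proof (intro sum.cong refl)
    fix k j
    assume kj: "k \<in> {1..N-1}" "j \<in> {1..N-1}"
    have "expectation (\<lambda>\<omega>. c k * (split_factor m r k \<omega> * u m k \<omega>) * (c j * (split_factor m r j \<omega> * u m j \<omega>)))
        = c k * c j * expectation (\<lambda>\<omega>. (split_factor m r k \<omega> * u m k \<omega>) * (split_factor m r j \<omega> * u m j \<omega>))"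
      by (simp add: mult_ac)
    then show "expectation (\<lambda>\<omega>. c k * (split_factor m r k \<omega> * u m k \<omega>) * (c j * (split_factor m r j \<omega> * u m j \<omega>)))
        = c k * c j * (expectation (\<lambda>\<omega>. u m k \<omega> * u m j \<omega>)
          + (if k = j then expectation (split_variance m r k) else 0))"
      by (simp only: product(2)[OF kj])
  qed
  also have "\<dots> = (\<Sum>k=1..N-1. \<Sum>j=1..N-1. c k * c j * expectation (\<lambda>\<omega>. u m k \<omega> * u m j \<omega>))
      + (\<Sum>k=1..N-1. (c k)\<^sup>2 * expectation (split_variance m r k))"
    by (rule sum_sum_mult_add_diagonal) simp
  also have "(\<Sum>k=1..N-1. \<Sum>j=1..N-1. c k * c j * expectation (\<lambda>\<omega>. u m k \<omega> * u m j \<omega>))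
      = (\<Sum>k=1..N-1. \<Sum>j=1..N-1. expectation (\<lambda>\<omega>. c k * u m k \<omega> * (c j * u m j \<omega>)))"
    by (simp add: mult_ac)
  also have "\<dots> = expectation (\<lambda>\<omega>. (\<Sum>k=1..N-1. c k * u m k \<omega>)\<^sup>2)"
    by (rule u_square(2)[symmetric])
  finally show "expectation (\<lambda>\<omega>. (\<Sum>k=1..N-1. c k * (split_factor m r k \<omega> * u m k \<omega>))\<^sup>2)
      = expectation (\<lambda>\<omega>. (\<Sum>k=1..N-1. c k * u m k \<omega>)\<^sup>2)
        + (\<Sum>k=1..N-1. (c k)\<^sup>2 * expectation (split_variance m r k))" .
qed

lemma u_square_integrable: "k \<in> {1..N-1} \<Longrightarrow> integrable P (\<lambda>\<omega>. (u m k \<omega>)\<^sup>2)"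
proof (induction m arbitrary: k)
  case 0
  interpret prob_space P by (rule prob)
  show ?case by (simp add: u_0)
next
  case (Suc m)
  then show ?case
    using second_moment_split(1)[OF t_grid_mono[of m "Suc m"] Suc.IH] by (simp add: u_Suc)
qed

lemma second_moment_heat_expansion:
  assumes n: "n \<in> {1..N-1}"
  shows "prob_space.expectation P (\<lambda>\<omega>. (\<Sum>k=1..N-1. heat_kernel N (real p * \<tau> * real N ^ 2) n k * u m k \<omega>)\<^sup>2)
     = (\<Sum>k=1..N-1. heat_kernel N (real (m + p) * \<tau> * real N ^ 2) n k * u0 (real k / real N))\<^sup>2
       + (\<Sum>l<m. \<Sum>k=1..N-1. (heat_kernel N (real (p + m - l) * \<tau> * real N ^ 2) n k)\<^sup>2
                               * prob_space.expectation P (split_variance l (t_grid (Suc l)) k))"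
proof (induction m arbitrary: p)
  case 0
  interpret prob_space P by (rule prob)
  show ?case by (simp add: u_0 prob_space)
next
  case (Suc m)
  interpret prob_space P by (rule prob)
  define c where "c a = heat_kernel N (real (Suc p) * \<tau> * real N ^ 2) n a" for a
  have "(\<Sum>k=1..N-1. heat_kernel N (real p * \<tau> * real N ^ 2) n k * u (Suc m) k \<omega>)
      = (\<Sum>a=1..N-1. (\<Sum>k=1..N-1. heat_kernel N (real p * \<tau> * real N ^ 2) n k * heat_kernel N (\<tau> * real N ^ 2) k a)
                     * (split_factor m (t_grid (Suc m)) a \<omega> * u m a \<omega>))" for \<omega>
    by (simp add: u_Suc sum_distrib_left sum_distrib_right mult.assoc) (rule sum.swap)
  also have "\<dots> \<omega> = (\<Sum>a=1..N-1. c a * (split_factor m (t_grid (Suc m)) a \<omega> * u m a \<omega>))" for \<omega>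
    unfolding heat_kernel_semigroup c_def by (simp add: algebra_simps)
  finally have "expectation (\<lambda>\<omega>. (\<Sum>k=1..N-1. heat_kernel N (real p * \<tau> * real N ^ 2) n k * u (Suc m) k \<omega>)\<^sup>2)
      = expectation (\<lambda>\<omega>. (\<Sum>a=1..N-1. c a * u m a \<omega>)\<^sup>2)
        + (\<Sum>a=1..N-1. (c a)\<^sup>2 * expectation (split_variance m (t_grid (Suc m)) a))"
    using second_moment_split(2)[OF t_grid_mono[of m "Suc m"] u_square_integrable] by simp
  also have "expectation (\<lambda>\<omega>. (\<Sum>a=1..N-1. c a * u m a \<omega>)\<^sup>2)
      = (\<Sum>k=1..N-1. heat_kernel N (real (m + Suc p) * \<tau> * real N ^ 2) n k * u0 (real k / real N))\<^sup>2
       + (\<Sum>l<m. \<Sum>k=1..N-1. (heat_kernel N (real (Suc p + m - l) * \<tau> * real N ^ 2) n k)\<^sup>2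
                               * expectation (split_variance l (t_grid (Suc l)) k))"
    unfolding c_def by (rule Suc.IH)
  finally show ?case
    by (simp add: c_def add.assoc)
qed

lemma expectation_split_variance_le:
  assumes \<gamma>: "real N * \<tau> \<le> \<gamma>" and k: "k \<in> {1..N-1}" and r: "t_grid l \<le> r" "r \<le> t_grid (Suc l)"
  shows "prob_space.expectation P (split_variance l r k)
     \<le> variance_rate L \<gamma> * \<tau> * real N * prob_space.expectation P (\<lambda>\<omega>. (u l k \<omega>)\<^sup>2)"
proof -
  interpret prob_space P by (rule prob)
  define x where "x = real N * L\<^sup>2 * \<tau>"
  have x: "0 \<le> x" "x \<le> L\<^sup>2 * \<gamma>"
    using \<tau>_pos \<gamma> mult_left_mono[OF \<gamma>, of "L\<^sup>2"] by (simp_all add: x_def mult_ac)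
  have "expectation (split_variance l r k) \<le> expectation (\<lambda>\<omega>. (exp x - 1) * (u l k \<omega>)\<^sup>2)"
  proof (rule integral_mono)
    show "integrable P (split_variance l r k)"
      by (rule split_variance_integrable(2)[OF r(1) k u_square_integrable[OF k]])
    show "integrable P (\<lambda>\<omega>. (exp x - 1) * (u l k \<omega>)\<^sup>2)"
      using u_square_integrable[OF k] by simp
    fix \<omega>
    have "real N * (fq g (u l k \<omega>))\<^sup>2 * (r - t_grid l) \<le> real N * L\<^sup>2 * (r - t_grid l)"
      using fq_square_le r by (simp add: mult_left_mono mult_right_mono)
    also have "\<dots> \<le> x"
      unfolding x_def using r by (simp add: t_grid_Suc mult_left_mono)
    finally show "split_variance l r k \<omega> \<le> (exp x - 1) * (u l k \<omega>)\<^sup>2"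
      unfolding split_variance_def by (simp add: mult_right_mono)
  qed
  also have "\<dots> = (exp x - 1) * expectation (\<lambda>\<omega>. (u l k \<omega>)\<^sup>2)"
    by simp
  also have "\<dots> \<le> x * exp (L\<^sup>2 * \<gamma>) * expectation (\<lambda>\<omega>. (u l k \<omega>)\<^sup>2)"
  proof (rule mult_right_mono)
    have "exp x - 1 \<le> x * exp x"
      by (rule exp_minus_one_le_mult_exp[OF x(1)])
    also have "\<dots> \<le> x * exp (L\<^sup>2 * \<gamma>)"
      using x by (simp add: mult_left_mono)
    finally show "exp x - 1 \<le> x * exp (L\<^sup>2 * \<gamma>)" .
  qed simp
  finally show ?thesis
    by (simp add: x_def variance_rate_def mult_ac)
qed

lemma second_moment_recursion:
  assumes \<gamma>: "real N * \<tau> \<le> \<gamma>" and B: "\<And>k. k \<in> {1..N-1} \<Longrightarrow> \<bar>u0 (real k / real N)\<bar> \<le> B"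
    and n: "n \<in> {1..N-1}"
  shows "prob_space.expectation P (\<lambda>\<omega>. (u m n \<omega>)\<^sup>2)
     \<le> B\<^sup>2 + (\<Sum>l<m. \<Sum>k=1..N-1. variance_rate L \<gamma> * \<tau> * real N * (heat_kernel N (real (m - l) * \<tau> * real N ^ 2) n k)\<^sup>2
                             * prob_space.expectation P (\<lambda>\<omega>. (u l k \<omega>)\<^sup>2))"
proof -
  interpret prob_space P by (rule prob)
  have "expectation (\<lambda>\<omega>. (u m n \<omega>)\<^sup>2)
      = (\<Sum>k=1..N-1. heat_kernel N (real m * \<tau> * real N ^ 2) n k * u0 (real k / real N))\<^sup>2
       + (\<Sum>l<m. \<Sum>k=1..N-1. (heat_kernel N (real (m - l) * \<tau> * real N ^ 2) n k)\<^sup>2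
                               * expectation (split_variance l (t_grid (Suc l)) k))"
    using second_moment_heat_expansion[OF n, of 0 m] heat_kernel_0_apply[OF n] by simp
  also have "(\<Sum>k=1..N-1. heat_kernel N (real m * \<tau> * real N ^ 2) n k * u0 (real k / real N))\<^sup>2 \<le> B\<^sup>2"
  proof -
    have "\<bar>\<Sum>k=1..N-1. heat_kernel N (real m * \<tau> * real N ^ 2) n k * u0 (real k / real N)\<bar> \<le> B"
      by (rule abs_heat_kernel_apply_le[OF _ N B n]) (use \<tau>_pos in simp)
    from power_mono[OF this abs_ge_zero, of 2] show ?thesis
      by simp
  qed
  also have "(\<Sum>l<m. \<Sum>k=1..N-1. (heat_kernel N (real (m - l) * \<tau> * real N ^ 2) n k)\<^sup>2
                             * expectation (split_variance l (t_grid (Suc l)) k))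
      \<le> (\<Sum>l<m. \<Sum>k=1..N-1. variance_rate L \<gamma> * \<tau> * real N * (heat_kernel N (real (m - l) * \<tau> * real N ^ 2) n k)\<^sup>2
                             * expectation (\<lambda>\<omega>. (u l k \<omega>)\<^sup>2))"
  proof (intro sum_mono)
    fix l k
    assume k: "k \<in> {1..N-1}"
    have "expectation (split_variance l (t_grid (Suc l)) k) \<le> variance_rate L \<gamma> * \<tau> * real N * expectation (\<lambda>\<omega>. (u l k \<omega>)\<^sup>2)"
      by (rule expectation_split_variance_le[OF \<gamma> k t_grid_mono[of l "Suc l"] order.refl]) simp
    then show "(heat_kernel N (real (m - l) * \<tau> * real N ^ 2) n k)\<^sup>2 * expectation (split_variance l (t_grid (Suc l)) k)
        \<le> variance_rate L \<gamma> * \<tau> * real N * (heat_kernel N (real (m - l) * \<tau> * real N ^ 2) n k)\<^sup>2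
          * expectation (\<lambda>\<omega>. (u l k \<omega>)\<^sup>2)"
      using mult_left_mono[OF _ zero_le_power2[of "heat_kernel N (real (m - l) * \<tau> * real N ^ 2) n k"]]
      by (fastforce simp: mult_ac)
  qed
  finally show ?thesis
    by simp
qed

lemma second_moment_bound:
  assumes \<gamma>: "real N * \<tau> \<le> \<gamma>" and B: "\<And>k. k \<in> {1..N-1} \<Longrightarrow> \<bar>u0 (real k / real N)\<bar> \<le> B"
    and n: "n \<in> {1..N-1}"
  shows "prob_space.expectation P (\<lambda>\<omega>. (u m n \<omega>)\<^sup>2)
     \<le> 2 * B\<^sup>2 * exp (gronwall_rate (variance_rate L \<gamma>) * real m * \<tau>)"
proof (rule discrete_gronwall_heat_weight[OF \<tau>_pos variance_rate_nonneg _ _ _ second_moment_recursion[OF \<gamma> B] n])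
  fix p n
  have "(\<Sum>k=1..N-1. variance_rate L \<gamma> * \<tau> * real N * (heat_kernel N (real p * \<tau> * real N ^ 2) n k)\<^sup>2)
      = variance_rate L \<gamma> * \<tau> * real N * (\<Sum>k=1..N-1. (heat_kernel N (real p * \<tau> * real N ^ 2) n k)\<^sup>2)"
    by (simp add: sum_distrib_left)
  also have "\<dots> \<le> variance_rate L \<gamma> * \<tau> * real N
      * (2 / real N * (\<Sum>i=1..N-1. exp (- 8 * real i ^ 2 * (real p * \<tau> * real N ^ 2) / real N ^ 2)))"
    using variance_rate_nonneg \<tau>_pos by (intro mult_left_mono sum_heat_kernel_square_le) simp_all
  also have "\<dots> = 2 * variance_rate L \<gamma> * \<tau> * (\<Sum>i=1..N-1. exp (- (8 * real i ^ 2) * \<tau> * real p))"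
    using N by (simp add: field_simps)
  finally show "(\<Sum>k=1..N-1. variance_rate L \<gamma> * \<tau> * real N * (heat_kernel N (real p * \<tau> * real N ^ 2) n k)\<^sup>2)
      \<le> 2 * variance_rate L \<gamma> * \<tau> * (\<Sum>i=1..N-1. exp (- (8 * real i ^ 2) * \<tau> * real p))" .
qed (use variance_rate_nonneg \<tau>_pos in simp_all)

lemma expectation_split_increment_square:
  assumes r: "t_grid m \<le> r" and n: "n \<in> {1..N-1}"
  shows "integrable P (\<lambda>\<omega>. (split_factor m r n \<omega> * u m n \<omega> - u m n \<omega>)\<^sup>2)"
    and "prob_space.expectation P (\<lambda>\<omega>. (split_factor m r n \<omega> * u m n \<omega> - u m n \<omega>)\<^sup>2)
       = prob_space.expectation P (split_variance m r n)"
proof -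
  interpret prob_space P by (rule prob)
  note square_int = u_square_integrable[OF n]
  note square = expectation_split_square[OF r n square_int]
  have meas: "(\<lambda>x::nat \<Rightarrow> real. (x n)\<^sup>2) \<in> borel_measurable seq_borel"
    by measurable
  have "integrable P (\<lambda>\<omega>. (u_vec m \<omega> n)\<^sup>2)"
    using square_int n by (simp add: u_vec_apply)
  with expectation_mult_split_factor[OF r n meas] n
  have martingale: "integrable P (\<lambda>\<omega>. (u m n \<omega>)\<^sup>2 * split_factor m r n \<omega>)"
      "expectation (\<lambda>\<omega>. (u m n \<omega>)\<^sup>2 * split_factor m r n \<omega>) = expectation (\<lambda>\<omega>. (u m n \<omega>)\<^sup>2)"
    by (simp_all add: u_vec_apply)
  have expand: "(split_factor m r n \<omega> * u m n \<omega> - u m n \<omega>)\<^sup>2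
      = (split_factor m r n \<omega> * u m n \<omega>)\<^sup>2 - 2 * ((u m n \<omega>)\<^sup>2 * split_factor m r n \<omega>) + (u m n \<omega>)\<^sup>2" for \<omega>
    by (simp add: power2_eq_square algebra_simps)
  show "integrable P (\<lambda>\<omega>. (split_factor m r n \<omega> * u m n \<omega> - u m n \<omega>)\<^sup>2)"
    unfolding expand using square(1) martingale(1) square_int by simp
  show "expectation (\<lambda>\<omega>. (split_factor m r n \<omega> * u m n \<omega> - u m n \<omega>)\<^sup>2) = expectation (split_variance m r n)"
    unfolding expand using square martingale square_int by simp
qed

lemma LT_interp_eq:
  assumes "t_grid m \<le> t" "t < t_grid (Suc m)"
  shows "LT_interp g u0 W T M N t n \<omega> = split_factor m t n \<omega> * u m n \<omega>"
proof -
  have "real m \<le> t / \<tau>" "t / \<tau> < real m + 1"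
    using assms \<tau>_pos by (simp_all add: t_grid_def field_simps)
  then have "nat \<lfloor>t / \<tau>\<rfloor> = m"
    by linarith
  then show ?thesis
    unfolding LT_interp_def split_factor_def WN_increment_def u_def t_grid_def \<tau>_def[symmetric]
    by (simp add: Let_def)
qed

lemma expectation_split_variance_bound:
  assumes \<gamma>: "real N * \<tau> \<le> \<gamma>" and B: "\<And>k. k \<in> {1..N-1} \<Longrightarrow> \<bar>u0 (real k / real N)\<bar> \<le> B"
    and n: "n \<in> {1..N-1}" and m: "m < M" and t: "t_grid m \<le> t" "t \<le> t_grid (Suc m)"
  defines "\<kappa> \<equiv> variance_rate L \<gamma>"
  shows "prob_space.expectation P (split_variance m t n)
       \<le> (sqrt (2 * \<kappa> * exp (gronwall_rate \<kappa> * T)) * \<bar>B\<bar> * sqrt (real N * \<tau>))\<^sup>2"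
proof -
  interpret prob_space P by (rule prob)
  have "exp (gronwall_rate \<kappa> * real m * \<tau>) \<le> exp (gronwall_rate \<kappa> * T)"
    using gronwall_rate_pos[OF variance_rate_nonneg] m M T
    by (simp add: \<kappa>_def \<tau>_def field_simps)
  then have "expectation (\<lambda>\<omega>. (u m n \<omega>)\<^sup>2) \<le> 2 * B\<^sup>2 * exp (gronwall_rate \<kappa> * T)"
    using second_moment_bound[OF \<gamma> B n, of m] mult_left_mono[of _ _ "2 * B\<^sup>2"]
    by (fastforce simp: \<kappa>_def)
  then have "\<kappa> * \<tau> * real N * expectation (\<lambda>\<omega>. (u m n \<omega>)\<^sup>2) \<le> \<kappa> * \<tau> * real N * (2 * B\<^sup>2 * exp (gronwall_rate \<kappa> * T))"
    using variance_rate_nonneg \<tau>_pos by (intro mult_left_mono) (simp_all add: \<kappa>_def)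
  moreover have "expectation (split_variance m t n) \<le> \<kappa> * \<tau> * real N * expectation (\<lambda>\<omega>. (u m n \<omega>)\<^sup>2)"
    unfolding \<kappa>_def by (rule expectation_split_variance_le[OF \<gamma> n t])
  moreover have "\<kappa> * \<tau> * real N * (2 * B\<^sup>2 * exp (gronwall_rate \<kappa> * T))
      = (sqrt (2 * \<kappa> * exp (gronwall_rate \<kappa> * T)) * \<bar>B\<bar> * sqrt (real N * \<tau>))\<^sup>2"
    using variance_rate_nonneg \<tau>_pos by (simp add: \<kappa>_def power_mult_distrib mult_ac)
  ultimately show ?thesis
    by linarith
qed

lemma LT_interp_increment_bound:
  assumes \<gamma>: "T / real M \<le> \<gamma> * (1 / real N)" and u0_bound: "\<And>x. x \<in> {0..1} \<Longrightarrow> \<bar>u0 x\<bar> \<le> B"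
    and m: "m < M" and t: "real m * (T / real M) \<le> t" "t < real (Suc m) * (T / real M)"
    and n: "1 \<le> n \<and> n \<le> N - 1"
  shows "integrable P (\<lambda>\<omega>. (LT_interp g u0 W T M N t n \<omega> - LT g u0 W T M N m n \<omega>)\<^sup>2)"
    and "sqrt (prob_space.expectation P (\<lambda>\<omega>. (LT_interp g u0 W T M N t n \<omega> - LT g u0 W T M N m n \<omega>)\<^sup>2))
       \<le> increment_constant L \<gamma> T * (1 + B) * sqrt ((T / real M) / (1 / real N))"
proof -
  define \<kappa> where "\<kappa> = variance_rate L \<gamma>"
  have n: "n \<in> {1..N-1}" and t: "t_grid m \<le> t" "t < t_grid (Suc m)"
    using n t by (simp_all add: t_grid_def \<tau>_def)
  have \<gamma>: "real N * \<tau> \<le> \<gamma>" and N\<tau>: "real N * \<tau> = (T / real M) / (1 / real N)"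
    using \<gamma> N by (simp_all add: \<tau>_def field_simps)
  have "\<bar>u0 (real k / real N)\<bar> \<le> B" if "k \<in> {1..N-1}" for k
    using that by (intro u0_bound) auto
  note variance = expectation_split_variance_bound[OF \<gamma> this n m t(1) less_imp_le[OF t(2)], folded \<kappa>_def]
  have increment: "(\<lambda>\<omega>. (LT_interp g u0 W T M N t n \<omega> - LT g u0 W T M N m n \<omega>)\<^sup>2)
      = (\<lambda>\<omega>. (split_factor m t n \<omega> * u m n \<omega> - u m n \<omega>)\<^sup>2)"
    using LT_interp_eq[OF t] by (simp add: u_def)
  show "integrable P (\<lambda>\<omega>. (LT_interp g u0 W T M N t n \<omega> - LT g u0 W T M N m n \<omega>)\<^sup>2)"
    unfolding increment by (rule expectation_split_increment_square(1)[OF t(1) n])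
  have "sqrt (prob_space.expectation P (split_variance m t n))
      \<le> sqrt (2 * \<kappa> * exp (gronwall_rate \<kappa> * T)) * \<bar>B\<bar> * sqrt (real N * \<tau>)"
  proof (rule real_le_lsqrt[OF _ variance])
    show "0 \<le> sqrt (2 * \<kappa> * exp (gronwall_rate \<kappa> * T)) * \<bar>B\<bar> * sqrt (real N * \<tau>)"
      using variance_rate_nonneg[of L \<gamma>] \<tau>_pos unfolding \<kappa>_def by (intro mult_nonneg_nonneg) simp_all
  qed
  also have "\<dots> \<le> increment_constant L \<gamma> T * (1 + B) * sqrt (real N * \<tau>)"
  proof (rule mult_right_mono)
    have "0 \<le> B" "0 \<le> sqrt (2 * \<kappa> * exp (gronwall_rate \<kappa> * T))"
      using u0_bound[of 0] variance_rate_nonneg by (simp_all add: \<kappa>_def)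
    then show "sqrt (2 * \<kappa> * exp (gronwall_rate \<kappa> * T)) * \<bar>B\<bar> \<le> increment_constant L \<gamma> T * (1 + B)"
      by (simp add: increment_constant_def \<kappa>_def algebra_simps)
  qed (use \<tau>_pos in simp)
  finally show "sqrt (prob_space.expectation P (\<lambda>\<omega>. (LT_interp g u0 W T M N t n \<omega> - LT g u0 W T M N m n \<omega>)\<^sup>2))
      \<le> increment_constant L \<gamma> T * (1 + B) * sqrt ((T / real M) / (1 / real N))"
    unfolding increment expectation_split_increment_square(2)[OF t(1) n] N\<tau> .
qed

end

theorem lemma5p1:
  fixes P :: "'a measure" and F :: "real \<Rightarrow> 'a measure"
    and W :: "real \<Rightarrow> real \<Rightarrow> 'a \<Rightarrow> real" and g u0 :: "real \<Rightarrow> real"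
  assumes "prob_space P"
    and "brownian_sheet P F W"
    and "g C1_differentiable_on UNIV" and "\<exists>L. lipschitz_on L UNIV g" and "g 0 = 0"
    and "C3_on_unit u0" and "u0 0 = 0" and "u0 1 = 0"
  shows "\<forall>\<gamma>>0. \<forall>T>0. \<exists>C>0. \<forall>(M::nat) (N::nat) (m::nat) (t::real).
           0 < M \<longrightarrow> 0 < N \<longrightarrow> T / real M \<le> \<gamma> * (1 / real N) \<longrightarrow> m < M \<longrightarrow>
           real m * (T / real M) \<le> t \<longrightarrow> t < real (Suc m) * (T / real M) \<longrightarrow>
           (\<forall>n. 1 \<le> n \<and> n \<le> N - 1 \<longrightarrow>
              integrable P (\<lambda>\<omega>. (LT_interp g u0 W T M N t n \<omega> - LT g u0 W T M N m n \<omega>)^2) \<and>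
              sqrt (prob_space.expectation P
                      (\<lambda>\<omega>. (LT_interp g u0 W T M N t n \<omega> - LT g u0 W T M N m n \<omega>)^2))
                \<le> C * (1 + sup_norm01 u0) * sqrt ((T / real M) / (1 / real N)))"
proof (intro allI impI)
  fix \<gamma> T :: real
  assume T: "0 < T"
  \<comment> \<open>only the Lipschitz bound on g, g 0 = 0 and the continuity of u0 are needed\<close>
  obtain L where L: "L-lipschitz_on UNIV g"
    using assms(4) by blast
  define L' where "L' = max L \<bar>deriv g 0\<bar>"
  have scheme: "lie_trotter P F W g T M N L'" if "0 < M" "0 < N" for M N
    unfolding L'_def by (intro lie_trotter.intro assms(1,2) T that fq_measurable[OF L] fq_abs_le[OF L assms(5)])
  have u0_bound: "\<bar>u0 x\<bar> \<le> sup_norm01 u0" if "x \<in> {0..1}" for x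
    using abs_le_sup_norm01[OF C3_on_unit_imp_continuous[OF assms(6)] that] .
  show "\<exists>C>0. \<forall>(M::nat) (N::nat) (m::nat) (t::real).
           0 < M \<longrightarrow> 0 < N \<longrightarrow> T / real M \<le> \<gamma> * (1 / real N) \<longrightarrow> m < M \<longrightarrow>
           real m * (T / real M) \<le> t \<longrightarrow> t < real (Suc m) * (T / real M) \<longrightarrow>
           (\<forall>n. 1 \<le> n \<and> n \<le> N - 1 \<longrightarrow>
              integrable P (\<lambda>\<omega>. (LT_interp g u0 W T M N t n \<omega> - LT g u0 W T M N m n \<omega>)^2) \<and>
              sqrt (prob_space.expectation P
                      (\<lambda>\<omega>. (LT_interp g u0 W T M N t n \<omega> - LT g u0 W T M N m n \<omega>)^2))
                \<le> C * (1 + sup_norm01 u0) * sqrt ((T / real M) / (1 / real N)))"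
    by (intro exI[of _ "increment_constant L' \<gamma> T"] conjI increment_constant_pos allI impI;
        rule lie_trotter.LT_interp_increment_bound[OF scheme _ u0_bound]; assumption)
qed

end
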